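(* Let $r\in(1,\infty)$ and let $m:G\to(0,\infty)$ be a $w$-moderate weight. Let $(x_i)_{i\in I}$ be a family in $G$ indexed by a countable set $I$, and let $\theta=(\theta_i)_{i\in I}$ be a family of positive numbers. Assume: (i) (weak Banach frame condition for $\mathrm{Co}(L_{r,m})$) the analysis map $A:\mathrm{Co}(L_{r,m})\to\ell_{r,\theta}(I)$, $A\varphi=\big(\langle\varphi,\pi(x_i)u\rangle_{\mathcal S_w}\big)_{i\in I}$, is well-defined and bounded, and there are constants $0<c\le C$ with $c\|\varphi\|_{\mathrm{Co}(L_{r,m})}\le\|A\varphi\|_{\ell_{r,\theta}}\le C\|\varphi\|_{\mathrm{Co}(L_{r,m})}$ for all $\varphi\in\mathrm{Co}(L_{r,m})$; (ii) (weak atomic decomposition condition for $\mathrm{Co}(L_{r',m^{-1}})$) for every $c=(c_i)_{i\in I}\in\ell_{r',\theta^{-1}}(I)$ the series $\sum_{i\in I}c_i\,\pi(x_i)u$ converges in $\mathrm{Co}(L_{r',m^{-1}})$, and the resulting synthesis map $S:\ell_{r',\theta^{-1}}(I)\to\mathrm{Co}(L_{r',m^{-1}})$, $Sc=\sum_{i\in I}c_i\,\pi(x_i)u$, is a well-defined bounded linear map. Then the right convolution operator $RC_K:f\mapsto f*K$ is a well-defined bounded linear operator on $L_{r,m}(G)$.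
   Context: Setting. $G$ is a locally compact, second countable group with left Haar measure (integrals written $\int_G f(x)\,dx$, $|E|$ denotes the Haar measure of $E$), identity $e$ and modular function $\Delta$. For measurable $f,g$: $(f*g)(x)=\int_G f(y)g(y^{-1}x)\,dy$ (where the integral exists), $\lambda(x)f(y)=f(x^{-1}y)$, $\langle f,g\rangle_{L_2}=\int_G f\overline g$. $w:G\to(0,\infty)$ is a fixed continuous weight with $w(xy)\le w(x)w(y)$ and $w(x)=w(x^{-1})$ for all $x,y$. For a weight $v>0$ and $p\in[1,\infty]$, $L_{p,v}(G)$ is the space of measurable $f$ with $\|f\|_{L_{p,v}}:=\|vf\|_{L_p}<\infty$; for a positive weight $\theta$ on a countable set $I$, $\ell_{p,\theta}(I)=\{c:(\theta_ic_i)_i\in\ell_p(I)\}$ with norm $\|(\theta_ic_i)\|_{\ell_p}$, and $\theta^{-1}=(\theta_i^{-1})_i$. A continuous $m:G\to(0,\infty)$ is $w$-moderate if $m(xy)\le w(x)m(y)$ and $m(xy)\le m(x)w(y)$ for all $x,y\in G$ (then $m^{-1}$ is $w$-moderate too). $\pi$ is a strongly continuous unitary representation of $G$ on a separable complex Hilbert space $\mathcal H$, and $u\in\mathcal H$ is such that $Vv(x)=\langle v,\pi(x)u\rangle_{\mathcal H}$ defines an isometry $V:\mathcal H\to L_2(G)$. $K(x)=\langle u,\pi(x)u\rangle_{\mathcal H}$ is the reproducing kernel (so $K*K=K$, $\overline{K(x)}=K(x^{-1})$). Standing assumption: $K\in L_{p,w}(G)$ for all $p\in(1,\infty)$. $\mathcal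 S_w=\{v\in\mathcal H: Vv\in L_{p,w}(G)\ \forall p\in(1,\infty)\}$, a Fréchet space under the seminorms $v\mapsto\|Vv\|_{L_{p,w}}$; $\mathcal S_w'$ is its anti-linear dual with pairing $\langle\cdot,\cdot\rangle_{\mathcal S_w}$, and $\mathcal H\hookrightarrow\mathcal S_w'$ canonically. The extended voice transform is $V_eT(x)=\langle T,\pi(x)u\rangle_{\mathcal S_w}$ for $T\in\mathcal S_w'$. For $r\in(1,\infty)$ and $w$-moderate $m$: $\mathrm{Co}(L_{r,m})=\{T\in\mathcal S_w':V_eT\in L_{r,m}(G)\}$ with norm $\|T\|_{\mathrm{Co}(L_{r,m})}=\|V_eT\|_{L_{r,m}}$ (a Banach space containing all $\pi(x)u$). $r'$ denotes the conjugate exponent, $1/r+1/r'=1$. *)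

theory Defs
  imports "HOL-Analysis.Analysis"
begin

definition lcsc_group_haar ::
  "('g::{t2_space,second_countable_topology} \<Rightarrow> 'g \<Rightarrow> 'g) \<Rightarrow> ('g \<Rightarrow> 'g) \<Rightarrow> 'g \<Rightarrow> 'g measure \<Rightarrow> bool"
  where "lcsc_group_haar gmult ginv e M \<longleftrightarrow>
    \<comment> \<open>group axioms\<close>
    (\<forall>x y z. gmult (gmult x y) z = gmult x (gmult y z)) \<and>
    (\<forall>x. gmult e x = x) \<and> (\<forall>x. gmult (ginv x) x = e) \<and>
    \<comment> \<open>topological group, locally compact (Hausdorff, second countable by the type class)\<close>
    continuous_on UNIV (\<lambda>p. gmult (fst p) (snd p)) \<and> continuous_on UNIV ginv \<and>
    locally_compact_space (euclidean :: 'g topology) \<and>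
    \<comment> \<open>left Haar measure\<close>
    sets M = sets borel \<and>
    (\<forall>x. \<forall>A\<in>sets M. emeasure M ((gmult x) ` A) = emeasure M A) \<and>
    (\<forall>C. compact C \<longrightarrow> emeasure M C < \<infinity>) \<and>
    (\<forall>U. open U \<and> U \<noteq> {} \<longrightarrow> 0 < emeasure M U)"

definition Lpw :: "'g measure \<Rightarrow> real \<Rightarrow> ('g \<Rightarrow> real) \<Rightarrow> ('g \<Rightarrow> complex) \<Rightarrow> bool"
  where "Lpw M p v f \<longleftrightarrow> f \<in> borel_measurable M \<and> integrable M (\<lambda>x. (v x * cmod (f x)) powr p)"

definition Lpw_norm :: "'g measure \<Rightarrow> real \<Rightarrow> ('g \<Rightarrow> real) \<Rightarrow> ('g \<Rightarrow> complex) \<Rightarrow> real"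
  where "Lpw_norm M p v f = (\<integral>x. (v x * cmod (f x)) powr p \<partial>M) powr (1 / p)"

definition ellw :: "'i set \<Rightarrow> real \<Rightarrow> ('i \<Rightarrow> real) \<Rightarrow> ('i \<Rightarrow> complex) \<Rightarrow> bool"
  where "ellw I p \<theta> c \<longleftrightarrow> (\<lambda>i. (\<theta> i * cmod (c i)) powr p) summable_on I"

definition ellw_norm :: "'i set \<Rightarrow> real \<Rightarrow> ('i \<Rightarrow> real) \<Rightarrow> ('i \<Rightarrow> complex) \<Rightarrow> real"
  where "ellw_norm I p \<theta> c = (\<Sum>\<^sub>\<infinity>i\<in>I. (\<theta> i * cmod (c i)) powr p) powr (1 / p)"

definition conv :: "'g measure \<Rightarrow> ('g \<Rightarrow> 'g \<Rightarrow> 'g) \<Rightarrow> ('g \<Rightarrow> 'g) \<Rightarrow> ('g \<Rightarrow> complex) \<Rightarrow> ('g \<Rightarrow> complex) \<Rightarrow> 'g \<Rightarrow> complex"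
  where "conv M gmult ginv f g = (\<lambda>x. \<integral>y. f y * g (gmult (ginv y) x) \<partial>M)"

definition submult_weight :: "('g \<Rightarrow> 'g \<Rightarrow> 'g) \<Rightarrow> ('g \<Rightarrow> 'g) \<Rightarrow> ('g::topological_space \<Rightarrow> real) \<Rightarrow> bool"
  where "submult_weight gmult ginv w \<longleftrightarrow> continuous_on UNIV w \<and> (\<forall>x. 0 < w x) \<and>
     (\<forall>x y. w (gmult x y) \<le> w x * w y) \<and> (\<forall>x. w x = w (ginv x))"

definition w_moderate :: "('g \<Rightarrow> 'g \<Rightarrow> 'g) \<Rightarrow> ('g::topological_space \<Rightarrow> real) \<Rightarrow> ('g \<Rightarrow> real) \<Rightarrow> bool"
  where "w_moderate gmult w m \<longleftrightarrow> continuous_on UNIV m \<and> (\<forall>x. 0 < m x) \<and>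
     (\<forall>x y. m (gmult x y) \<le> w x * m y \<and> m (gmult x y) \<le> m x * w y)"

text \<open>The carrier is a real Banach space; smul is the complex scalar multiplication
  (extending the real one) and ip the complex inner product, linear in the first and
  conjugate linear in the second argument, inducing the norm.\<close>

definition complex_hilbert ::
  "(complex \<Rightarrow> 'h::{real_normed_vector,banach} \<Rightarrow> 'h) \<Rightarrow> ('h \<Rightarrow> 'h \<Rightarrow> complex) \<Rightarrow> bool"
  where "complex_hilbert smul ip \<longleftrightarrow>
    (\<forall>a x y. smul a (x + y) = smul a x + smul a y) \<and>
    (\<forall>a b x. smul (a + b) x = smul a x + smul b x) \<and>
    (\<forall>a b x. smul (a * b) x = smul a (smul b x)) \<and>
    (\<forall>t x. smul (complex_of_real t) x = t *\<^sub>R x) \<and>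
    (\<forall>x y z. ip (x + y) z = ip x z + ip y z) \<and>
    (\<forall>a x y. ip (smul a x) y = a * ip x y) \<and>
    (\<forall>x y. ip y x = cnj (ip x y)) \<and>
    (\<forall>x. (norm x)\<^sup>2 = Re (ip x x)) \<and>
    (\<exists>D::'h set. countable D \<and> closure D = UNIV)"

definition strongly_cont_unitary_rep ::
  "('g \<Rightarrow> 'g \<Rightarrow> 'g) \<Rightarrow> 'g \<Rightarrow> (complex \<Rightarrow> 'h::{real_normed_vector,banach} \<Rightarrow> 'h) \<Rightarrow> ('h \<Rightarrow> 'h \<Rightarrow> complex)
    \<Rightarrow> ('g::topological_space \<Rightarrow> 'h \<Rightarrow> 'h) \<Rightarrow> bool"
  where "strongly_cont_unitary_rep gmult e smul ip rep \<longleftrightarrow>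
    (\<forall>x v v'. rep x (v + v') = rep x v + rep x v') \<and>
    (\<forall>x a v. rep x (smul a v) = smul a (rep x v)) \<and>
    (\<forall>x. bij (rep x)) \<and>
    (\<forall>x v v'. ip (rep x v) (rep x v') = ip v v') \<and>
    (\<forall>x y. rep (gmult x y) = rep x \<circ> rep y) \<and>
    rep e = id \<and>
    (\<forall>v. continuous_on UNIV (\<lambda>x. rep x v))"

definition voice :: "('h \<Rightarrow> 'h \<Rightarrow> complex) \<Rightarrow> ('g \<Rightarrow> 'h \<Rightarrow> 'h) \<Rightarrow> 'h \<Rightarrow> 'h \<Rightarrow> 'g \<Rightarrow> complex"
  where "voice ip rep u v = (\<lambda>x. ip v (rep x u))"

definition kernel :: "('h \<Rightarrow> 'h \<Rightarrow> complex) \<Rightarrow> ('g \<Rightarrow> 'h \<Rightarrow> 'h) \<Rightarrow> 'h \<Rightarrow> 'g \<Rightarrow> complex"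
  where "kernel ip rep u = (\<lambda>x. ip u (rep x u))"

definition Sw :: "'g measure \<Rightarrow> ('g \<Rightarrow> real) \<Rightarrow> ('h \<Rightarrow> 'h \<Rightarrow> complex) \<Rightarrow> ('g \<Rightarrow> 'h \<Rightarrow> 'h) \<Rightarrow> 'h \<Rightarrow> 'h set"
  where "Sw M w ip rep u = {v. \<forall>p>1. Lpw M p w (voice ip rep u v)}"

text \<open>Elements of the anti-dual are represented by their values on S_w (and 0 elsewhere).
  Continuity w.r.t. the Frechet topology given by the seminorms is expressed by a bound
  by finitely many of the seminorms.\<close>

definition Sw_dual :: "'g measure \<Rightarrow> ('g \<Rightarrow> real) \<Rightarrow> (complex \<Rightarrow> 'h::{real_normed_vector,banach} \<Rightarrow> 'h)
    \<Rightarrow> ('h \<Rightarrow> 'h \<Rightarrow> complex) \<Rightarrow> ('g \<Rightarrow> 'h \<Rightarrow> 'h) \<Rightarrow> 'h \<Rightarrow> ('h \<Rightarrow> complex) set"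
  where "Sw_dual M w smul ip rep u = {T.
    (\<forall>v\<in>Sw M w ip rep u. \<forall>v'\<in>Sw M w ip rep u. T (v + v') = T v + T v') \<and>
    (\<forall>a. \<forall>v\<in>Sw M w ip rep u. T (smul a v) = cnj a * T v) \<and>
    (\<forall>v. v \<notin> Sw M w ip rep u \<longrightarrow> T v = 0) \<and>
    (\<exists>P C. finite P \<and> P \<subseteq> {1<..} \<and>
       (\<forall>v\<in>Sw M w ip rep u. cmod (T v) \<le> C * (\<Sum>p\<in>P. Lpw_norm M p w (voice ip rep u v))))}"

definition embed :: "'g measure \<Rightarrow> ('g \<Rightarrow> real) \<Rightarrow> ('h \<Rightarrow> 'h \<Rightarrow> complex) \<Rightarrow> ('g \<Rightarrow> 'h \<Rightarrow> 'h) \<Rightarrow> 'h \<Rightarrow> 'h \<Rightarrow> ('h \<Rightarrow> complex)"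
  where "embed M w ip rep u h = (\<lambda>v. if v \<in> Sw M w ip rep u then ip h v else 0)"

definition ext_voice :: "('g \<Rightarrow> 'h \<Rightarrow> 'h) \<Rightarrow> 'h \<Rightarrow> ('h \<Rightarrow> complex) \<Rightarrow> 'g \<Rightarrow> complex"
  where "ext_voice rep u T = (\<lambda>x. T (rep x u))"

definition Co :: "'g measure \<Rightarrow> ('g \<Rightarrow> real) \<Rightarrow> (complex \<Rightarrow> 'h::{real_normed_vector,banach} \<Rightarrow> 'h)
    \<Rightarrow> ('h \<Rightarrow> 'h \<Rightarrow> complex) \<Rightarrow> ('g \<Rightarrow> 'h \<Rightarrow> 'h) \<Rightarrow> 'h \<Rightarrow> real \<Rightarrow> ('g \<Rightarrow> real) \<Rightarrow> ('h \<Rightarrow> complex) set"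
  where "Co M w smul ip rep u r m = {T \<in> Sw_dual M w smul ip rep u. Lpw M r m (ext_voice rep u T)}"

definition Co_norm :: "'g measure \<Rightarrow> ('g \<Rightarrow> 'h \<Rightarrow> 'h) \<Rightarrow> 'h \<Rightarrow> real \<Rightarrow> ('g \<Rightarrow> real) \<Rightarrow> ('h \<Rightarrow> complex) \<Rightarrow> real"
  where "Co_norm M rep u r m T = Lpw_norm M r m (ext_voice rep u T)"

definition coorbit_setting ::
  "('g::{t2_space,second_countable_topology} \<Rightarrow> 'g \<Rightarrow> 'g) \<Rightarrow> ('g \<Rightarrow> 'g) \<Rightarrow> 'g \<Rightarrow> 'g measure \<Rightarrow> ('g \<Rightarrow> real)
   \<Rightarrow> (complex \<Rightarrow> 'h::{real_normed_vector,banach} \<Rightarrow> 'h) \<Rightarrow> ('h \<Rightarrow> 'h \<Rightarrow> complex) \<Rightarrow> ('g \<Rightarrow> 'h \<Rightarrow> 'h) \<Rightarrow> 'h \<Rightarrow> bool"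
  where "coorbit_setting gmult ginv e M w smul ip rep u \<longleftrightarrow>
    lcsc_group_haar gmult ginv e M \<and>
    submult_weight gmult ginv w \<and>
    complex_hilbert smul ip \<and>
    strongly_cont_unitary_rep gmult e smul ip rep \<and>
    \<comment> \<open>V is an isometry H \<rightarrow> L_2(G)\<close>
    (\<forall>v. Lpw M 2 (\<lambda>_. 1) (voice ip rep u v) \<and> Lpw_norm M 2 (\<lambda>_. 1) (voice ip rep u v) = norm v) \<and>
    \<comment> \<open>standing assumption: K \<in> L_{p,w} for all 1 < p < \<infinity>\<close>
    (\<forall>p>1. Lpw M p w (kernel ip rep u))"

end

theory Submission
  imports Defs
begin

text \<open>
  For a bounded, compactly supported test function g, the convolution g * K is the extended voice
  transform of the functional V* g = (v \<mapsto> \<langle>g, V v\<rangle>), which lies in Co(L_{r,m}) by a Young-type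
  estimate (Tonelli and left invariance of Haar measure). The lower frame inequality therefore
  bounds c0 \<parallel>g * K\<parallel> by the \<ell>_{r,\<theta>}-norm of the samples (g * K)(x_i). That norm is computed by
  duality against finitely supported c in \<ell>_{r',1/\<theta>}, and
  \<Sum> cnj(c_i) (g * K)(x_i) = \<langle>g, V(\<Sum> c_i \<pi>(x_i) u)\<rangle> is at most D \<parallel>g\<parallel> \<parallel>c\<parallel> by Holder's inequality
  and the boundedness of the synthesis map. Hence \<parallel>g * K\<parallel> \<le> D/c0 \<parallel>g\<parallel> for test functions, and
  truncation, dominated convergence and Fatou's lemma extend the bound to all of L_{r,m}.
\<close>

section \<open>Weighted Lebesgue spaces\<close>

lemma Holder_inequality_nonneg:
  fixes f g :: "'a \<Rightarrow> real" and p q :: real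
  assumes pq: "p > 1" "q > 1" "1/p + 1/q = 1"
    and fm: "f \<in> borel_measurable M" and f0: "\<And>x. f x \<ge> 0" and fi: "integrable M (\<lambda>x. f x powr p)"
    and gm: "g \<in> borel_measurable M" and g0: "\<And>x. g x \<ge> 0" and gi: "integrable M (\<lambda>x. g x powr q)"
  shows "integrable M (\<lambda>x. f x * g x)"
    and "(\<integral>x. f x * g x \<partial>M) \<le> (\<integral>x. f x powr p \<partial>M) powr (1/p) * (\<integral>x. g x powr q \<partial>M) powr (1/q)"
proof -
  show int: "integrable M (\<lambda>x. f x * g x)"
  proof (rule Bochner_Integration.integrable_bound)
    show "integrable M (\<lambda>x. f x powr p / p + g x powr q / q)" using fi gi by auto
    show "AE x in M. norm (f x * g x) \<le> norm (f x powr p / p + g x powr q / q)"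
      using Youngs_inequality[OF pq f0 g0] f0 g0 pq by (auto intro!: AE_I2 simp: abs_mult)
  qed (use fm gm in auto)
  define A where "A = (\<integral>x. f x powr p \<partial>M)"
  define B where "B = (\<integral>x. g x powr q \<partial>M)"
  have A0: "A \<ge> 0" and B0: "B \<ge> 0"
    unfolding A_def B_def by (auto intro: integral_nonneg_AE)
  show "(\<integral>x. f x * g x \<partial>M) \<le> A powr (1/p) * B powr (1/q)"
  proof (cases "A = 0 \<or> B = 0")
    case True
    then have "AE x in M. f x powr p = 0 \<or> g x powr q = 0"
      using integral_nonneg_eq_0_iff_AE[OF fi] integral_nonneg_eq_0_iff_AE[OF gi]
      by (auto simp: A_def B_def elim: eventually_mono)
    then have "AE x in M. f x * g x = 0" by eventually_elim simp
    then show ?thesis using A0 B0 by (simp add: integral_eq_zero_AE)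
  next
    case False
    then have Ap: "A > 0" and Bp: "B > 0" using A0 B0 by auto
    define a where "a = A powr (1/p)"
    define b where "b = B powr (1/q)"
    have ab: "a > 0" "b > 0" using Ap Bp by (auto simp: a_def b_def)
    have "a powr p = A" "b powr q = B" using Ap Bp pq by (simp_all add: a_def b_def powr_powr)
    \<comment> \<open>Young's inequality for the normalised functions \<open>f/a\<close> and \<open>g/b\<close>\<close>
    then have pt: "f x * g x / (a * b) \<le> f x powr p / (p * A) + g x powr q / (q * B)" for x
      using Youngs_inequality[OF pq, of "f x / a" "g x / b"] f0[of x] g0[of x] ab
      by (simp add: powr_divide field_simps)
    have "(\<integral>x. f x * g x / (a * b) \<partial>M) \<le> (\<integral>x. f x powr p / (p * A) + g x powr q / (q * B) \<partial>M)"
      using int fi gi pt by (intro integral_mono) auto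
    also have "\<dots> = 1" using fi gi Ap Bp pq by (simp add: A_def B_def)
    finally show ?thesis using ab by (simp add: a_def b_def field_simps)
  qed
qed

lemma powr_add_le_two_powr:
  fixes a b p :: real assumes "a \<ge> 0" "b \<ge> 0" "p > 0"
  shows "(a + b) powr p \<le> 2 powr p * (a powr p + b powr p)"
proof -
  have "(a + b) powr p \<le> (2 * max a b) powr p"
    using assms by (intro powr_mono2) auto
  also have "\<dots> = 2 powr p * max a b powr p" using assms by (simp add: powr_mult)
  also have "max a b powr p \<le> a powr p + b powr p"
    using assms by (cases "a \<le> b") (auto simp: max_def)
  finally show ?thesis using assms by (simp add: mult_left_mono)
qed

lemma Lpw_norm_nonneg: "Lpw_norm M p v f \<ge> 0"
  by (simp add: Lpw_norm_def)

lemma Lpw_add: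
  assumes "Lpw M p v f" "Lpw M p v g" "\<And>x. v x \<ge> 0" "p > 0" "v \<in> borel_measurable M"
  shows "Lpw M p v (\<lambda>x. f x + g x)"
  unfolding Lpw_def
proof
  show m: "(\<lambda>x. f x + g x) \<in> borel_measurable M" using assms by (auto simp: Lpw_def)
  show "integrable M (\<lambda>x. (v x * cmod (f x + g x)) powr p)"
  proof (rule Bochner_Integration.integrable_bound)
    show "integrable M (\<lambda>x. 2 powr p * ((v x * cmod (f x)) powr p + (v x * cmod (g x)) powr p))"
      using assms by (auto simp: Lpw_def)
    show "(\<lambda>x. (v x * cmod (f x + g x)) powr p) \<in> borel_measurable M" using m assms by auto
    show "AE x in M. norm ((v x * cmod (f x + g x)) powr p)
        \<le> norm (2 powr p * ((v x * cmod (f x)) powr p + (v x * cmod (g x)) powr p))"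
    proof (rule AE_I2)
      fix x
      have "(v x * cmod (f x + g x)) powr p \<le> (v x * cmod (f x) + v x * cmod (g x)) powr p"
        using assms(3)[of x] assms(4)
        by (intro powr_mono2) (auto simp: norm_triangle_ineq distrib_left[symmetric] mult_left_mono)
      also have "\<dots> \<le> 2 powr p * ((v x * cmod (f x)) powr p + (v x * cmod (g x)) powr p)"
        using assms(3)[of x] assms(4) by (intro powr_add_le_two_powr) auto
      finally show "norm ((v x * cmod (f x + g x)) powr p)
        \<le> norm (2 powr p * ((v x * cmod (f x)) powr p + (v x * cmod (g x)) powr p))" by simp
    qed
  qed
qed

lemma Lpw_cmult:
  assumes "Lpw M p v f" "\<And>x. v x \<ge> 0" "p > 0"
  shows "Lpw M p v (\<lambda>x. c * f x)"
proof -
  have "(\<lambda>x. (v x * cmod (c * f x)) powr p) = (\<lambda>x. cmod c powr p * (v x * cmod (f x)) powr p)"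
    using assms by (auto simp: norm_mult powr_mult mult_ac)
  then show ?thesis using assms by (auto simp: Lpw_def)
qed

lemma Lpw_diff:
  assumes "Lpw M p v f" "Lpw M p v g" "\<And>x. v x \<ge> 0" "p > 0" "v \<in> borel_measurable M"
  shows "Lpw M p v (\<lambda>x. f x - g x)"
  using Lpw_add[OF assms(1) Lpw_cmult[OF assms(2), of "-1"] assms(3-5)] assms(3,4) by simp

lemma Lpw_sum:
  assumes "\<And>i. i \<in> F \<Longrightarrow> Lpw M p v (f i)" "\<And>x. v x \<ge> 0" "p > 0" "v \<in> borel_measurable M"
  shows "Lpw M p v (\<lambda>x. \<Sum>i\<in>F. f i x)"
  using assms(1)
proof (induction F rule: infinite_finite_induct)
  case (insert i F)
  then have "Lpw M p v (\<lambda>x. f i x + (\<Sum>i\<in>F. f i x))"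
    by (intro Lpw_add assms(2-4)) auto
  then show ?case using insert by simp
qed (simp_all add: Lpw_def)

lemma Lpw_mono:
  assumes f: "Lpw M p v f" and g: "g \<in> borel_measurable M" and le: "\<And>x. cmod (g x) \<le> cmod (f x)"
    and v: "\<And>x. v x \<ge> 0" "v \<in> borel_measurable M" and p: "p > 0"
  shows "Lpw M p v g" "Lpw_norm M p v g \<le> Lpw_norm M p v f"
proof -
  have pt: "(v x * cmod (g x)) powr p \<le> (v x * cmod (f x)) powr p" for x
    using le[of x] v(1)[of x] p by (intro powr_mono2) (auto intro: mult_left_mono)
  have fi: "integrable M (\<lambda>x. (v x * cmod (f x)) powr p)" using f by (simp add: Lpw_def)
  have gi: "integrable M (\<lambda>x. (v x * cmod (g x)) powr p)"
    by (rule Bochner_Integration.integrable_bound[OF fi]) (use g v pt in auto)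
  show "Lpw M p v g" using gi g by (simp add: Lpw_def)
  have "(\<integral>x. (v x * cmod (g x)) powr p \<partial>M) \<le> (\<integral>x. (v x * cmod (f x)) powr p \<partial>M)"
    using gi fi pt by (rule integral_mono)
  then show "Lpw_norm M p v g \<le> Lpw_norm M p v f"
    unfolding Lpw_norm_def using p by (intro powr_mono2) (auto intro: integral_nonneg_AE)
qed

lemma borel_measurable_cnj[measurable]:
  "f \<in> borel_measurable N \<Longrightarrow> (\<lambda>y. cnj (f y)) \<in> borel_measurable N"
  using borel_measurable_continuous_onI[OF continuous_on_cnj[OF continuous_on_id]]
    measurable_compose by blast

lemma Lpw_cnj: "Lpw M p v f \<Longrightarrow> Lpw M p v (\<lambda>y. cnj (f y))"
  and Lpw_norm_cnj: "Lpw_norm M p v (\<lambda>y. cnj (f y)) = Lpw_norm M p v f"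
  by (auto simp: Lpw_def Lpw_norm_def)

lemma Lpw_bounded_support:
  assumes p: "p > 0" and g: "g \<in> borel_measurable M" and v: "v \<in> borel_measurable M"
    and C: "C \<in> sets M" "emeasure M C < \<infinity>" and N: "N \<ge> 0"
    and bd: "\<And>y. v y * cmod (g y) \<le> N * indicator C y" and v0: "\<And>y. 0 \<le> v y"
  shows "Lpw M p v g"
  unfolding Lpw_def
proof
  show "integrable M (\<lambda>x. (v x * cmod (g x)) powr p)"
  proof (rule Bochner_Integration.integrable_bound)
    show "integrable M (\<lambda>x. N powr p * indicator C x)" using C by simp
    show "AE x in M. norm ((v x * cmod (g x)) powr p) \<le> norm (N powr p * indicator C x)"
    proof (rule AE_I2)
      fix x
      have "(v x * cmod (g x)) powr p \<le> (N * indicator C x) powr p"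
        using bd[of x] v0[of x] p by (intro powr_mono2) auto
      also have "\<dots> = N powr p * indicator C x" using N p by (simp split: split_indicator)
      finally show "norm ((v x * cmod (g x)) powr p) \<le> norm (N powr p * indicator C x)"
        using N by simp
    qed
  qed (use g v in measurable)
qed (fact g)

lemma Lpw_Holder:
  fixes f g :: "'a \<Rightarrow> complex"
  assumes pq: "p > 1" "q > 1" "1/p + 1/q = 1"
    and v: "\<And>x. v x > 0" "v \<in> borel_measurable M"
    and f: "Lpw M p v f" and g: "Lpw M q (\<lambda>x. inverse (v x)) g"
  shows "integrable M (\<lambda>x. f x * g x)"
    and "cmod (\<integral>x. f x * g x \<partial>M) \<le> Lpw_norm M p v f * Lpw_norm M q (\<lambda>x. inverse (v x)) g"
proof -
  define F where "F x = v x * cmod (f x)" for x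
  define G where "G x = inverse (v x) * cmod (g x)" for x
  have FG: "F x * G x = cmod (f x * g x)" for x
    using v(1)[of x] by (simp add: F_def G_def norm_mult field_simps)
  have fm: "f \<in> borel_measurable M" and gm: "g \<in> borel_measurable M"
    using f g by (auto simp: Lpw_def)
  have "F \<in> borel_measurable M" "G \<in> borel_measurable M"
    unfolding F_def G_def using fm gm v(2) by measurable
  moreover have "F x \<ge> 0" "G x \<ge> 0" for x using v(1)[of x] by (simp_all add: F_def G_def)
  moreover have "integrable M (\<lambda>x. F x powr p)" "integrable M (\<lambda>x. G x powr q)"
    using f g by (simp_all add: Lpw_def F_def G_def)
  ultimately have H: "integrable M (\<lambda>x. F x * G x)"
      "(\<integral>x. F x * G x \<partial>M) \<le> (\<integral>x. F x powr p \<partial>M) powr (1/p) * (\<integral>x. G x powr q \<partial>M) powr (1/q)"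
    using Holder_inequality_nonneg[OF pq, where f=F and g=G and M=M] by auto
  show "integrable M (\<lambda>x. f x * g x)"
    using H(1) fm gm integrable_norm_iff[of "\<lambda>x. f x * g x"] by (simp add: FG)
  have "(\<integral>x. cmod (f x * g x) \<partial>M) \<le> Lpw_norm M p v f * Lpw_norm M q (\<lambda>x. inverse (v x)) g"
    using H(2) unfolding FG by (simp add: Lpw_norm_def F_def G_def)
  then show "cmod (\<integral>x. f x * g x \<partial>M) \<le> Lpw_norm M p v f * Lpw_norm M q (\<lambda>x. inverse (v x)) g"
    using integral_norm_bound[of M "\<lambda>x. f x * g x"] by linarith
qed

lemma conjugate_exponent:
  fixes r :: real assumes "r > 1"
  shows "r / (r - 1) > 1" "1 / r + 1 / (r / (r - 1)) = 1"
  using assms by (auto simp: field_simps)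

lemma infsum_finite_support:
  fixes h :: "'i \<Rightarrow> real"
  assumes F: "finite F" "F \<subseteq> I" and z: "\<And>i. i \<in> I \<Longrightarrow> i \<notin> F \<Longrightarrow> h i = 0"
  shows "h summable_on I" "infsum h I = sum h F"
proof -
  have "h summable_on F \<longleftrightarrow> h summable_on I"
    by (rule summable_on_cong_neutral) (use z F in auto)
  then show "h summable_on I" using F by simp
  have "infsum h F = infsum h I"
    by (rule infsum_cong_neutral) (use z F in auto)
  then show "infsum h I = sum h F" using F by simp
qed

lemma Lpw_Fatou:
  assumes p: "p > 0" and v: "\<And>x. 0 \<le> v x" "v \<in> borel_measurable M"
    and h: "\<And>n. Lpw M p v (h n)" and lim: "\<And>x. (\<lambda>n. h n x) \<longlonglongrightarrow> f x"
    and f: "f \<in> borel_measurable M" and bound: "\<And>n. Lpw_norm M p v (h n) \<le> R"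
  shows "Lpw M p v f" "Lpw_norm M p v f \<le> R"
proof -
  define U where "U n = (\<lambda>x. (v x * cmod (h n x)) powr p)" for n
  define V where "V = (\<lambda>x. (v x * cmod (f x)) powr p)"
  have R0: "R \<ge> 0" using bound[of 0] Lpw_norm_nonneg[of M p v "h 0"] by linarith
  have "h n \<in> borel_measurable M" for n using h by (simp add: Lpw_def)
  then have Um: "U n \<in> borel_measurable M" for n unfolding U_def using v(2) by measurable
  have Vm: "V \<in> borel_measurable M" unfolding V_def using f v(2) by measurable
  have U_bound: "(\<integral>\<^sup>+x. ennreal (U n x) \<partial>M) \<le> ennreal (R powr p)" for n
  proof -
    have ui: "integrable M (U n)" using h[of n] by (simp add: Lpw_def U_def)
    have "(\<integral>x. U n x \<partial>M) = Lpw_norm M p v (h n) powr p"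
      using p by (simp add: Lpw_norm_def U_def powr_powr integral_nonneg_AE)
    also have "\<dots> \<le> R powr p" using bound[of n] p by (intro powr_mono2) (auto simp: Lpw_norm_nonneg)
    finally show ?thesis using ui by (simp add: nn_integral_eq_integral U_def ennreal_leI)
  qed
  have U_lim: "(\<lambda>n. ennreal (U n x)) \<longlonglongrightarrow> ennreal (V x)" for x
    unfolding U_def V_def using p v(1)[of x]
    by (intro tendsto_ennrealI tendsto_powr' tendsto_mult tendsto_const tendsto_norm lim) auto
  have "(\<integral>\<^sup>+x. ennreal (V x) \<partial>M) = (\<integral>\<^sup>+x. liminf (\<lambda>n. ennreal (U n x)) \<partial>M)"
    by (simp add: lim_imp_Liminf[OF _ U_lim])
  also have "\<dots> \<le> liminf (\<lambda>n. \<integral>\<^sup>+x. ennreal (U n x) \<partial>M)"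
    by (rule nn_integral_liminf) (use Um in measurable)
  also have "\<dots> \<le> ennreal (R powr p)"
    by (rule order_trans[OF Liminf_le_Limsup Limsup_bounded]) (use U_bound in simp_all)
  finally have V_bound: "(\<integral>\<^sup>+x. ennreal (V x) \<partial>M) \<le> ennreal (R powr p)" .
  have Vint: "integrable M V"
    using Vm V_bound
    by (intro integrableI_nonneg) (auto simp: V_def top.not_eq_extremum intro: le_less_trans)
  then show "Lpw M p v f" using f by (simp add: Lpw_def V_def)
  have "(\<integral>x. V x \<partial>M) \<le> R powr p"
    using V_bound Vint by (simp add: nn_integral_eq_integral V_def ennreal_le_iff)
  then have "Lpw_norm M p v f \<le> (R powr p) powr (1 / p)"
    unfolding Lpw_norm_def using p
    by (intro powr_mono2) (auto intro!: integral_nonneg_AE simp: V_def)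
  then show "Lpw_norm M p v f \<le> R" using R0 p by (simp add: powr_powr)
qed

lemma Holder_indicator:
  fixes h :: "'a \<Rightarrow> real"
  assumes r: "r > 1" and C: "C \<in> sets M" "emeasure M C < \<infinity>"
    and h: "h \<in> borel_measurable M" "\<And>y. 0 \<le> h y"
    and hi: "integrable M (\<lambda>y. indicator C y * h y powr r)"
  shows "integrable M (\<lambda>y. indicator C y * h y)"
    and "(\<integral>y. indicator C y * h y \<partial>M)
           \<le> measure M C powr ((r - 1) / r) * (\<integral>y. indicator C y * h y powr r \<partial>M) powr (1 / r)"
proof -
  define q where "q = r / (r - 1)"
  note q = conjugate_exponent[OF r, folded q_def]
  have ind_q: "(\<lambda>y. (indicator C y :: real) powr q) = indicator C"
    using q(1) by (auto simp: fun_eq_iff split: split_indicator)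
  have ind_h: "(\<lambda>y. (indicator C y * h y) powr r) = (\<lambda>y. indicator C y * h y powr r)"
    using r by (auto simp: fun_eq_iff split: split_indicator)
  have ind2: "(\<lambda>y. indicator C y * (indicator C y * h y)) = (\<lambda>y. indicator C y * h y :: real)"
    by (auto simp: fun_eq_iff split: split_indicator)
  have "integrable M (\<lambda>y. indicator C y * (indicator C y * h y))"
    "(\<integral>y. indicator C y * (indicator C y * h y) \<partial>M)
       \<le> (\<integral>y. indicator C y powr q \<partial>M) powr (1/q) * (\<integral>y. (indicator C y * h y) powr r \<partial>M) powr (1/r)"
    using Holder_inequality_nonneg[OF q(1) r, where f="indicator C" and g="\<lambda>y. indicator C y * h y" and M=M]
      q(2) C h hi by (auto simp: ind_q ind_h add.commute Int_absorb2 sets.sets_into_space)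
  moreover have "1 / q = (r - 1) / r" using r by (simp add: q_def)
  ultimately show "integrable M (\<lambda>y. indicator C y * h y)"
    "(\<integral>y. indicator C y * h y \<partial>M)
       \<le> measure M C powr ((r - 1) / r) * (\<integral>y. indicator C y * h y powr r \<partial>M) powr (1 / r)"
    using C by (simp_all add: ind2 ind_q ind_h)
qed

lemma dual_sequence:
  fixes a :: "'i \<Rightarrow> complex" and \<theta> :: "'i \<Rightarrow> real"
  assumes r: "r > 1" and F: "finite F" "F \<subseteq> I" and \<theta>: "\<forall>i\<in>I. 0 < \<theta> i"
  defines "P \<equiv> \<Sum>i\<in>F. (\<theta> i * cmod (a i)) powr r"
  obtains c where "\<And>i. i \<notin> F \<Longrightarrow> c i = 0" and "(\<Sum>i\<in>F. cnj (c i) * a i) = P"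
    and "ellw I (r / (r - 1)) (\<lambda>i. inverse (\<theta> i)) c"
    and "ellw_norm I (r / (r - 1)) (\<lambda>i. inverse (\<theta> i)) c = P powr ((r - 1) / r)"
proof
  define q where "q = r / (r - 1)"
  have rq: "(r - 1) * q = r" using r by (simp add: q_def)
  \<comment> \<open>the extremal sequence for the duality of weighted \<open>\<ell>\<^sub>r\<close> and \<open>\<ell>\<^sub>q\<close>: \<open>c i = \<theta> i powr r * |a i| powr (r - 2) * a i\<close>\<close>
  define c where "c i = (if i \<in> F \<and> a i \<noteq> 0
      then complex_of_real (\<theta> i powr r * cmod (a i) powr (r - 1) / cmod (a i)) * a i else 0)" for i
  show "c i = 0" if "i \<notin> F" for i using that by (simp add: c_def)
  have ca: "cnj (c i) * a i = complex_of_real ((\<theta> i * cmod (a i)) powr r)" if "i \<in> F" for i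
  proof (cases "i \<in> F \<and> a i \<noteq> 0")
    case True
    define \<rho> where "\<rho> = \<theta> i powr r * cmod (a i) powr (r - 1) / cmod (a i)"
    have "cnj (c i) * a i = complex_of_real \<rho> * (cnj (a i) * a i)"
      using True by (simp add: c_def \<rho>_def mult_ac)
    also have "cnj (a i) * a i = complex_of_real (cmod (a i) * cmod (a i))"
      using complex_norm_square[of "a i"] by (simp add: power2_eq_square mult.commute)
    also have "\<rho> * (cmod (a i) * cmod (a i)) = (\<theta> i * cmod (a i)) powr r"
      using True by (simp add: \<rho>_def powr_mult powr_diff)
    then have "complex_of_real \<rho> * complex_of_real (cmod (a i) * cmod (a i))
        = complex_of_real ((\<theta> i * cmod (a i)) powr r)"
      by (metis of_real_mult)
    finally show ?thesis .
  qed (use r that in \<open>auto simp: c_def\<close>)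
  then show "(\<Sum>i\<in>F. cnj (c i) * a i) = P" by (simp add: P_def)
  have cnorm: "(inverse (\<theta> i) * cmod (c i)) powr q = (if i \<in> F then (\<theta> i * cmod (a i)) powr r else 0)"
    if "i \<in> I" for i
  proof (cases "i \<in> F \<and> a i \<noteq> 0")
    case True
    have "\<theta> i > 0" using \<theta> that by auto
    moreover have "cmod (c i) = \<bar>\<theta> i powr r * cmod (a i) powr (r - 1) / cmod (a i)\<bar> * cmod (a i)"
      by (simp only: c_def if_P[OF True] norm_mult norm_of_real)
    then have "cmod (c i) = \<theta> i powr r * cmod (a i) powr (r - 1)"
      using True by simp
    ultimately have "inverse (\<theta> i) * cmod (c i) = (\<theta> i * cmod (a i)) powr (r - 1)"
      by (simp add: powr_diff powr_mult field_simps)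
    then show ?thesis using True rq by (simp add: powr_powr)
  qed (use r in \<open>auto simp: c_def\<close>)
  have z: "\<And>i. i \<in> I \<Longrightarrow> i \<notin> F \<Longrightarrow> (inverse (\<theta> i) * cmod (c i)) powr q = 0"
    using cnorm by simp
  show "ellw I (r / (r - 1)) (\<lambda>i. inverse (\<theta> i)) c"
    using infsum_finite_support(1)[OF F z] by (simp add: ellw_def q_def)
  have "infsum (\<lambda>i. (inverse (\<theta> i) * cmod (c i)) powr q) I = P"
    using infsum_finite_support(2)[OF F z] cnorm F by (simp add: P_def subset_eq)
  moreover have "1 / q = (r - 1) / r" using r by (simp add: q_def)
  ultimately show "ellw_norm I (r / (r - 1)) (\<lambda>i. inverse (\<theta> i)) c = P powr ((r - 1) / r)"
    by (simp add: ellw_norm_def q_def)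
qed

section \<open>Haar measure\<close>

locale haar_group =
  fixes gmult :: "'g::{t2_space,second_countable_topology} \<Rightarrow> 'g \<Rightarrow> 'g"
    and ginv :: "'g \<Rightarrow> 'g" and e :: 'g and M :: "'g measure"
  assumes haar: "lcsc_group_haar gmult ginv e M"
begin

lemma assoc: "gmult (gmult x y) z = gmult x (gmult y z)"
  and left_unit: "gmult e x = x" and left_inverse: "gmult (ginv x) x = e"
  and continuous_mult: "continuous_on UNIV (\<lambda>p. gmult (fst p) (snd p))"
  and continuous_inv: "continuous_on UNIV ginv"
  and locally_compact: "locally_compact_space (euclidean :: 'g topology)"
  and sets_M: "sets M = sets borel"
  and emeasure_mult_left: "\<And>x A. A \<in> sets M \<Longrightarrow> emeasure M ((gmult x) ` A) = emeasure M A"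
  and emeasure_compact_finite: "\<And>C. compact C \<Longrightarrow> emeasure M C < \<infinity>"
  using haar unfolding lcsc_group_haar_def by auto

lemma right_inverse: "gmult x (ginv x) = e"
proof -
  have "gmult x (ginv x) = gmult (gmult (ginv (ginv x)) (ginv x)) (gmult x (ginv x))"
    by (simp add: left_inverse left_unit)
  also have "\<dots> = gmult (ginv (ginv x)) (gmult (gmult (ginv x) x) (ginv x))"
    by (simp add: assoc)
  also have "\<dots> = e" by (simp add: left_inverse left_unit)
  finally show ?thesis .
qed

lemma right_unit: "gmult x e = x"
  by (metis assoc left_inverse left_unit right_inverse)

lemma inv_mult_cancel_left: "gmult (ginv x) (gmult x y) = y"
  by (simp add: assoc[symmetric] left_inverse left_unit)

lemma mult_inv_cancel_left: "gmult x (gmult (ginv x) y) = y"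
  by (simp add: assoc[symmetric] right_inverse left_unit)

lemma inv_inv: "ginv (ginv x) = x"
  by (metis inv_mult_cancel_left left_inverse right_unit)

lemma inv_mult: "ginv (gmult x y) = gmult (ginv y) (ginv x)"
  by (metis assoc inv_mult_cancel_left left_inverse right_unit)

lemma space_M: "space M = UNIV"
  using sets_M sets_eq_imp_space_eq by fastforce

lemma measurable_M_eq_borel: "measurable M N = measurable borel N"
  by (rule measurable_cong_sets) (auto simp: sets_M)

lemma continuous_mult_left: "continuous_on UNIV (gmult a)"
proof -
  have "continuous_on UNIV ((\<lambda>p. gmult (fst p) (snd p)) \<circ> (\<lambda>y. (a, y)))"
    by (intro continuous_on_compose continuous_intros continuous_on_subset[OF continuous_mult]) auto
  then show ?thesis by (simp add: o_def)
qed

lemma continuous_mult_right: "continuous_on UNIV (\<lambda>y. gmult y a)"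
proof -
  have "continuous_on UNIV ((\<lambda>p. gmult (fst p) (snd p)) \<circ> (\<lambda>y. (y, a)))"
    by (intro continuous_on_compose continuous_intros continuous_on_subset[OF continuous_mult]) auto
  then show ?thesis by (simp add: o_def)
qed

lemma continuous_inv_mult: "continuous_on UNIV (\<lambda>p. gmult (ginv (snd p)) (fst p))"
proof -
  have "continuous_on UNIV ((\<lambda>p. gmult (fst p) (snd p)) \<circ> (\<lambda>p. (ginv (snd p), fst p)))"
    by (intro continuous_on_compose continuous_intros continuous_on_subset[OF continuous_mult]
        continuous_on_compose2[OF continuous_inv]) auto
  then show ?thesis by (simp add: o_def)
qed

lemma measurable_continuous_M: "continuous_on UNIV f \<Longrightarrow> f \<in> measurable M M"
  using borel_measurable_continuous_onI
  by (simp add: measurable_M_eq_borel measurable_cong_sets[OF refl sets_M])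

lemma measurable_mult_left[measurable]: "gmult a \<in> measurable M M"
  by (rule measurable_continuous_M[OF continuous_mult_left])

lemma measurable_mult_right[measurable]: "(\<lambda>y. gmult y a) \<in> measurable M M"
  by (rule measurable_continuous_M[OF continuous_mult_right])

lemma measurable_inv[measurable]: "ginv \<in> measurable M M"
  by (rule measurable_continuous_M[OF continuous_inv])

lemma measurable_inv_mult[measurable]:
  "(\<lambda>p. gmult (ginv (snd p)) (fst p)) \<in> measurable (M \<Otimes>\<^sub>M M) M"
proof -
  have "sets (M \<Otimes>\<^sub>M M) = sets borel"
    using sets_pair_measure_cong[OF sets_M sets_M] by (metis borel_prod)
  then show ?thesis
    using borel_measurable_continuous_onI[OF continuous_inv_mult]
    by (simp add: measurable_cong_sets[OF _ sets_M])
qed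

lemma distr_mult_left: "distr M M (gmult a) = M"
proof (rule measure_eqI)
  fix A assume "A \<in> sets (distr M M (gmult a))"
  then have A: "A \<in> sets M" by simp
  have "gmult a -` A = gmult (ginv a) ` A"
  proof (intro set_eqI iffI)
    fix x assume "x \<in> gmult a -` A"
    then show "x \<in> gmult (ginv a) ` A"
      using inv_mult_cancel_left[of a x] by (metis image_eqI vimageE)
  qed (auto simp: mult_inv_cancel_left)
  then show "emeasure (distr M M (gmult a)) A = emeasure M A"
    using A by (simp add: emeasure_distr emeasure_mult_left space_M)
qed simp

lemma nn_integral_mult_left:
  "f \<in> borel_measurable M \<Longrightarrow> (\<integral>\<^sup>+y. f (gmult a y) \<partial>M) = (\<integral>\<^sup>+y. f y \<partial>M)"
  using nn_integral_distr[of "gmult a" M M f] by (simp add: distr_mult_left)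

lemma integrable_mult_left:
  fixes f :: "'g \<Rightarrow> 'b::{banach,second_countable_topology}"
  shows "f \<in> borel_measurable M \<Longrightarrow> integrable M (\<lambda>y. f (gmult a y)) \<longleftrightarrow> integrable M f"
  using integrable_distr_eq[of "gmult a" M M f] by (simp add: distr_mult_left)

lemma compact_in_sets: "compact C \<Longrightarrow> C \<in> sets M"
  by (metis borel_closed compact_imp_closed sets_M)

lemma compact_exhaustion:
  obtains C :: "nat \<Rightarrow> 'g set" where "\<And>n. compact (C n)" "incseq C" "(\<Union>n. C n) = UNIV"
proof -
  define \<U> where "\<U> = {U::'g set. open U \<and> (\<exists>K. compact K \<and> U \<subseteq> K)}"
  have cover: "\<Union>\<U> = UNIV"
  proof -
    have "x \<in> \<Union>\<U>" for x :: 'g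
    proof -
      have "\<exists>U K. openin euclidean U \<and> compactin euclidean K \<and> x \<in> U \<and> U \<subseteq> K"
        using locally_compact unfolding locally_compact_space_def by simp
      then obtain U K where UK: "openin euclidean U" "compactin euclidean K" "x \<in> U" "U \<subseteq> K"
        by blast
      then have "open U" "compact K" using open_openin compactin_euclidean_iff by blast+
      then show ?thesis unfolding \<U>_def using UK(3,4) by blast
    qed
    then show ?thesis by blast
  qed
  have opn: "\<And>S. S \<in> \<U> \<Longrightarrow> openin (top_of_set UNIV) S" unfolding \<U>_def by simp
  obtain \<U>' where U': "\<U>' \<subseteq> \<U>" "countable \<U>'" "\<Union>\<U>' = \<Union>\<U>"
    using Lindelof_openin[of \<U> UNIV, OF opn] by blast
  define Kf where "Kf U = (SOME K. compact K \<and> U \<subseteq> K)" for U :: "'g set"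
  have Kf: "compact (Kf U) \<and> U \<subseteq> Kf U" if "U \<in> \<U>" for U
  proof -
    have "\<exists>K. compact K \<and> U \<subseteq> K" using that unfolding \<U>_def by blast
    then show ?thesis unfolding Kf_def by (rule someI_ex)
  qed
  have "\<U>' \<noteq> {}" using U'(3) cover by (metis Union_empty empty_not_UNIV)
  then have from_nat: "from_nat_into \<U>' k \<in> \<U>" for k using from_nat_into U'(1) by blast
  define C where "C n = (\<Union>k\<le>n. Kf (from_nat_into \<U>' k))" for n
  show ?thesis
  proof
    show "compact (C n)" for n
      unfolding C_def using Kf[OF from_nat] by (intro compact_UN) auto
    show "incseq C" unfolding C_def by (intro monoI UN_mono) auto
    have "x \<in> (\<Union>n. C n)" for x
    proof -
      have "x \<in> \<Union>\<U>'" using U'(3) cover by simp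
      then obtain U where U: "U \<in> \<U>'" "x \<in> U" by (rule UnionE)
      obtain k where k: "from_nat_into \<U>' k = U" using from_nat_into_surj[OF U'(2) U(1)] by blast
      have "x \<in> Kf (from_nat_into \<U>' k)" using Kf[OF from_nat[of k]] U(2) unfolding k by blast
      then show ?thesis unfolding C_def by blast
    qed
    then show "(\<Union>n. C n) = UNIV" by blast
  qed
qed

sublocale sigma_finite_measure M
proof
  obtain C :: "nat \<Rightarrow> 'g set" where C: "\<And>n. compact (C n)" "incseq C" "(\<Union>n. C n) = UNIV"
    using compact_exhaustion by blast
  show "\<exists>A. countable A \<and> A \<subseteq> sets M \<and> \<Union> A = space M \<and> (\<forall>a\<in>A. emeasure M a \<noteq> \<infinity>)"
  proof (intro exI[of _ "range C"] conjI)
    show "range C \<subseteq> sets M" using compact_in_sets C(1) by blast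
    show "\<forall>a\<in>range C. emeasure M a \<noteq> \<infinity>" using emeasure_compact_finite C(1) by (metis imageE less_irrefl)
  qed (use C(3) space_M in auto)
qed

lemma nn_integral_indicator_translates:
  fixes h :: "'g \<Rightarrow> ennreal"
  assumes h: "h \<in> borel_measurable M" and C: "C \<in> sets M"
  shows "(\<integral>\<^sup>+x. \<integral>\<^sup>+y. indicator C y * h (gmult (ginv y) x) \<partial>M \<partial>M) = emeasure M C * (\<integral>\<^sup>+z. h z \<partial>M)"
proof -
  interpret pair_sigma_finite M M by (simp add: pair_sigma_finite_def sigma_finite_measure_axioms)
  have "(\<integral>\<^sup>+x. \<integral>\<^sup>+y. indicator C y * h (gmult (ginv y) x) \<partial>M \<partial>M)
      = (\<integral>\<^sup>+y. \<integral>\<^sup>+x. indicator C y * h (gmult (ginv y) x) \<partial>M \<partial>M)"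
    by (rule Fubini'[symmetric]) (use h C in measurable)
  also have "\<dots> = (\<integral>\<^sup>+y. indicator C y * (\<integral>\<^sup>+x. h (gmult (ginv y) x) \<partial>M) \<partial>M)"
    by (intro nn_integral_cong nn_integral_cmult) (use h in measurable)
  also have "\<dots> = (\<integral>\<^sup>+y. (\<integral>\<^sup>+z. h z \<partial>M) * indicator C y \<partial>M)"
    using nn_integral_mult_left[OF h] by (simp add: mult.commute)
  also have "\<dots> = (\<integral>\<^sup>+z. h z \<partial>M) * emeasure M C"
    using nn_integral_cmult_indicator[OF C] by simp
  finally show ?thesis by (simp add: mult.commute)
qed

end

section \<open>The reproducing kernel\<close>

locale coorbit_setup =
  fixes gmult :: "'g::{t2_space,second_countable_topology} \<Rightarrow> 'g \<Rightarrow> 'g"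
    and ginv :: "'g \<Rightarrow> 'g" and e :: 'g and M :: "'g measure" and w :: "'g \<Rightarrow> real"
    and smul :: "complex \<Rightarrow> 'h::{real_normed_vector,banach} \<Rightarrow> 'h"
    and ip :: "'h \<Rightarrow> 'h \<Rightarrow> complex" and rep :: "'g \<Rightarrow> 'h \<Rightarrow> 'h" and u :: 'h
  assumes setting: "coorbit_setting gmult ginv e M w smul ip rep u"
begin

sublocale haar_group gmult ginv e M
  using setting unfolding coorbit_setting_def by unfold_locales auto

abbreviation "K \<equiv> kernel ip rep u"

lemma weight_continuous: "continuous_on UNIV w"
  and weight_pos: "\<And>x. 0 < w x"
  and weight_submult: "\<And>x y. w (gmult x y) \<le> w x * w y"
  and weight_inv: "\<And>x. w (ginv x) = w x"
  using setting unfolding coorbit_setting_def submult_weight_def by auto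

lemma ip_add_left: "ip (x + y) z = ip x z + ip y z"
  and ip_smul_left: "ip (smul a x) y = a * ip x y"
  and ip_cnj: "ip y x = cnj (ip x y)"
  and smul_of_real: "smul (complex_of_real t) x = t *\<^sub>R x"
  using setting unfolding coorbit_setting_def complex_hilbert_def by blast+

lemma ip_zero_left: "ip 0 y = 0"
  using ip_add_left[of 0 0 y] by simp

lemma smul_zero: "smul 0 x = 0"
  using smul_of_real[of 0 x] by simp

lemma rep_unitary: "ip (rep x v) (rep x v') = ip v v'"
  and rep_mult: "rep (gmult x y) = rep x \<circ> rep y"
  and rep_unit: "rep e = id"
  using setting unfolding coorbit_setting_def strongly_cont_unitary_rep_def by auto

lemma ip_rep: "ip (rep x a) (rep y b) = ip a (rep (gmult (ginv x) y) b)"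
proof -
  have "rep y b = rep x (rep (gmult (ginv x) y) b)"
    using rep_mult[of x "gmult (ginv x) y"] by (simp add: mult_inv_cancel_left)
  then show ?thesis by (simp add: rep_unitary)
qed

lemma kernel_inv: "K (ginv z) = cnj (K z)"
proof -
  have "K (ginv z) = ip (rep z u) (rep e u)"
    using ip_rep[of z u e u] by (simp add: right_unit kernel_def)
  also have "\<dots> = cnj (K z)" by (simp add: rep_unit kernel_def ip_cnj[of u])
  finally show ?thesis .
qed

lemma kernel_swap: "K (gmult (ginv y) x) = cnj (K (gmult (ginv x) y))"
  using kernel_inv[of "gmult (ginv x) y"] by (simp add: inv_mult inv_inv)

lemma voice_rep: "voice ip rep u (rep x u) y = K (gmult (ginv x) y)"
  by (simp add: voice_def kernel_def ip_rep)

lemma weight_ge_1: "w x \<ge> 1"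
proof -
  have "w e \<le> w e * w e" using weight_submult[of e e] by (simp add: left_unit)
  then have we: "w e \<ge> 1" using weight_pos[of e] by simp
  have "w e \<le> w x * w x" using weight_submult[of x "ginv x"] by (simp add: right_inverse weight_inv)
  then have "1 \<le> w x * w x" using we by simp
  then show ?thesis using weight_pos[of x] mult_strict_mono[of "w x" 1 "w x" 1] by force
qed

lemma borel_measurable_weight[measurable]: "w \<in> borel_measurable M"
  using borel_measurable_continuous_onI[OF weight_continuous] by (simp add: measurable_M_eq_borel)

lemma kernel_Lpw: "p > 1 \<Longrightarrow> Lpw M p w K"
  using setting unfolding coorbit_setting_def by auto

lemma borel_measurable_kernel[measurable]: "K \<in> borel_measurable M"
  using kernel_Lpw[of 2] by (simp add: Lpw_def)

lemma integrable_kernel_translate: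
  "p > 1 \<Longrightarrow> integrable M (\<lambda>y. (w (gmult (ginv x) y) * cmod (K (gmult (ginv x) y))) powr p)"
  using kernel_Lpw integrable_mult_left[of "\<lambda>z. (w z * cmod (K z)) powr p" "ginv x"]
  by (simp add: Lpw_def)

lemma rep_u_in_Sw: "rep x u \<in> Sw M w ip rep u"
  unfolding Sw_def
proof (intro CollectI allI impI)
  fix p :: real assume p: "p > 1"
  \<comment> \<open>submultiplicativity moves the weight onto the translate: \<open>w y \<le> w x * w (x\<inverse> y)\<close>\<close>
  have "(w y * cmod (K (gmult (ginv x) y))) powr p
      \<le> w x powr p * (w (gmult (ginv x) y) * cmod (K (gmult (ginv x) y))) powr p" for y
  proof -
    have "w y \<le> w x * w (gmult (ginv x) y)"
      using weight_submult[of x "gmult (ginv x) y"] by (simp add: mult_inv_cancel_left)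
    then have "(w y * cmod (K (gmult (ginv x) y))) powr p
        \<le> (w x * (w (gmult (ginv x) y) * cmod (K (gmult (ginv x) y)))) powr p"
      using weight_pos[of y] p by (intro powr_mono2) (auto simp flip: mult.assoc intro!: mult_right_mono)
    then show ?thesis using weight_pos by (simp add: powr_mult)
  qed
  then have "integrable M (\<lambda>y. (w y * cmod (K (gmult (ginv x) y))) powr p)"
    by (intro Bochner_Integration.integrable_bound[OF integrable_mult_right[OF integrable_kernel_translate[OF p, of x]],
          of _ "w x powr p"] AE_I2) (auto intro: order_trans)
  then show "Lpw M p w (voice ip rep u (rep x u))"
    by (simp add: Lpw_def voice_rep[abs_def])
qed

end

section \<open>Convolution with the reproducing kernel\<close>

locale moderate_coorbit = coorbit_setup +
  fixes m
  assumes moderate: "w_moderate gmult w m"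
begin

lemma moderate_continuous: "continuous_on UNIV m"
  and moderate_pos: "\<And>x. 0 < m x"
  and moderate_right: "\<And>x y. m (gmult x y) \<le> m x * w y"
  using moderate unfolding w_moderate_def by auto

lemma borel_measurable_moderate[measurable]: "m \<in> borel_measurable M"
  using borel_measurable_continuous_onI[OF moderate_continuous] by (simp add: measurable_M_eq_borel)

lemma moderate_translate: "m x \<le> m y * w (gmult (ginv y) x)"
  using moderate_right[of y "gmult (ginv y) x"] by (simp add: mult_inv_cancel_left)

lemma inverse_moderate_le: "inverse (m y) \<le> w (gmult (ginv x) y) / m x"
proof -
  have "w (gmult (ginv y) x) = w (gmult (ginv x) y)"
    using weight_inv[of "gmult (ginv x) y"] by (simp add: inv_mult inv_inv)
  then show ?thesis
    using moderate_translate[of x y] moderate_pos[of x] moderate_pos[of y] by (simp add: field_simps)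
qed

lemma kernel_translate_Lpw:
  assumes q: "q > 1"
  shows "Lpw M q (\<lambda>y. inverse (m y)) (\<lambda>y. K (gmult (ginv x) y))"
    and "Lpw M q (\<lambda>y. inverse (m y)) (\<lambda>y. K (gmult (ginv y) x))"
proof -
  have "Lpw M q (\<lambda>y. inverse (m y)) g"
    if g: "g \<in> borel_measurable M" and gK: "\<And>y. cmod (g y) = cmod (K (gmult (ginv x) y))" for g
    unfolding Lpw_def
  proof
    have "(inverse (m y) * cmod (g y)) powr q
        \<le> (1 / m x) powr q * (w (gmult (ginv x) y) * cmod (K (gmult (ginv x) y))) powr q" for y
    proof -
      have "inverse (m y) * cmod (g y) \<le> w (gmult (ginv x) y) / m x * cmod (K (gmult (ginv x) y))"
        using mult_right_mono[OF inverse_moderate_le[of y x], of "cmod (g y)"] gK[of y] by simp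
      then have "(inverse (m y) * cmod (g y)) powr q
          \<le> ((1 / m x) * (w (gmult (ginv x) y) * cmod (K (gmult (ginv x) y)))) powr q"
        using moderate_pos[of y] q by (intro powr_mono2) auto
      also have "\<dots> = (1 / m x) powr q * (w (gmult (ginv x) y) * cmod (K (gmult (ginv x) y))) powr q"
        by (rule powr_mult)
      finally show ?thesis .
    qed
    then show "integrable M (\<lambda>y. (inverse (m y) * cmod (g y)) powr q)"
      by (intro Bochner_Integration.integrable_bound[OF integrable_mult_right[OF integrable_kernel_translate[OF q, of x]],
            of _ "(1 / m x) powr q"] AE_I2) (use g in \<open>auto intro: order_trans\<close>)
  qed (fact g)
  then show "Lpw M q (\<lambda>y. inverse (m y)) (\<lambda>y. K (gmult (ginv x) y))"
    and "Lpw M q (\<lambda>y. inverse (m y)) (\<lambda>y. K (gmult (ginv y) x))"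
    by (auto simp: kernel_swap[of _ x])
qed

lemma conv_integrable:
  assumes r: "r > 1" and f: "Lpw M r m f"
  shows "integrable M (\<lambda>y. f y * K (gmult (ginv y) x))"
  using Lpw_Holder(1)[OF r conjugate_exponent(1,2)[OF r] moderate_pos borel_measurable_moderate f
      kernel_translate_Lpw(2)[OF conjugate_exponent(1)[OF r]]] .

lemma borel_measurable_conv:
  assumes f: "f \<in> borel_measurable M"
  shows "conv M gmult ginv f K \<in> borel_measurable M"
proof -
  have "(\<lambda>p. f (snd p) * K (gmult (ginv (snd p)) (fst p))) \<in> borel_measurable (M \<Otimes>\<^sub>M M)"
    using f by measurable
  then show ?thesis
    unfolding conv_def by (rule borel_measurable_lebesgue_integral[OF measurable_cong[THEN iffD1], rotated]) auto
qed



definition weighted_kernel :: "'a \<Rightarrow> real" where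
  "weighted_kernel z = w z * cmod (K z)"

lemma weighted_kernel_nonneg: "weighted_kernel z \<ge> 0"
  using weight_pos[of z] by (simp add: weighted_kernel_def)

lemma borel_measurable_weighted_kernel[measurable]: "weighted_kernel \<in> borel_measurable M"
  unfolding weighted_kernel_def by measurable

lemma integrable_weighted_kernel_translate:
  assumes r: "r > 1"
  shows "integrable M (\<lambda>y. weighted_kernel (gmult (ginv y) x) powr r)"
proof -
  have "weighted_kernel (gmult (ginv y) x) = weighted_kernel (gmult (ginv x) y)" for y
    using kernel_swap[of y x] weight_inv[of "gmult (ginv x) y"]
    by (simp add: weighted_kernel_def inv_mult inv_inv)
  then show ?thesis using integrable_kernel_translate[OF r, of x] by (simp add: weighted_kernel_def)
qed

lemma conv_pointwise_bound:
  assumes r: "r > 1" and g: "Lpw M r m g" and bd: "\<And>y. m y * cmod (g y) \<le> N * indicator C y"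
    and int: "integrable M (\<lambda>y. indicator C y * weighted_kernel (gmult (ginv y) x))"
  shows "m x * cmod (conv M gmult ginv g K x)
           \<le> N * (\<integral>y. indicator C y * weighted_kernel (gmult (ginv y) x) \<partial>M)"
proof -
  have "m x * cmod (conv M gmult ginv g K x) \<le> (\<integral>y. m x * cmod (g y * K (gmult (ginv y) x)) \<partial>M)"
    using moderate_pos[of x] integral_norm_bound[of M "\<lambda>y. g y * K (gmult (ginv y) x)"]
    by (simp add: conv_def)
  also have "\<dots> \<le> (\<integral>y. N * (indicator C y * weighted_kernel (gmult (ginv y) x)) \<partial>M)"
  proof (rule integral_mono)
    show "integrable M (\<lambda>y. m x * cmod (g y * K (gmult (ginv y) x)))"
      using conv_integrable[OF r g] by simp
    show "integrable M (\<lambda>y. N * (indicator C y * weighted_kernel (gmult (ginv y) x)))"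
      using int by simp
    fix y
    have "m x * cmod (g y * K (gmult (ginv y) x))
        \<le> (m y * w (gmult (ginv y) x)) * (cmod (g y) * cmod (K (gmult (ginv y) x)))"
      using mult_right_mono[OF moderate_translate[of x y]] by (simp add: norm_mult)
    also have "\<dots> = (m y * cmod (g y)) * weighted_kernel (gmult (ginv y) x)"
      by (simp add: weighted_kernel_def mult_ac)
    also have "\<dots> \<le> (N * indicator C y) * weighted_kernel (gmult (ginv y) x)"
      using bd[of y] weighted_kernel_nonneg by (intro mult_right_mono) auto
    finally show "m x * cmod (g y * K (gmult (ginv y) x))
        \<le> N * (indicator C y * weighted_kernel (gmult (ginv y) x))"
      by (simp add: mult_ac)
  qed
  finally show ?thesis by simp
qed

lemma Lpw_conv_bounded_support:
  assumes r: "r > 1" and g: "g \<in> borel_measurable M" and C: "compact C" and N: "N \<ge> 0"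
    and bd: "\<And>y. m y * cmod (g y) \<le> N * indicator C y"
  shows "Lpw M r m (conv M gmult ginv g K)"
proof -
  have CS: "C \<in> sets M" and Cfin: "emeasure M C < \<infinity>"
    using compact_in_sets[OF C] emeasure_compact_finite[OF C] .
  have gL: "Lpw M r m g"
    using Lpw_bounded_support[OF _ g _ CS Cfin N bd] r moderate_pos by (simp add: less_imp_le)
  define J where "J x = (\<integral>y. indicator C y * weighted_kernel (gmult (ginv y) x) powr r \<partial>M)" for x
  have J0: "J x \<ge> 0" for x unfolding J_def by (rule integral_nonneg_AE) (auto simp: weighted_kernel_nonneg)
  have Jint: "integrable M (\<lambda>y. indicator C y * weighted_kernel (gmult (ginv y) x) powr r)" for x
    using integrable_real_mult_indicator[OF CS integrable_weighted_kernel_translate[OF r, of x]]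
    by (simp add: mult.commute)
  note Holder = Holder_indicator[OF r CS Cfin _ weighted_kernel_nonneg Jint, folded J_def]
  define c where "c = (N * measure M C powr ((r - 1) / r)) powr r"
  have pointwise: "(m x * cmod (conv M gmult ginv g K x)) powr r \<le> c * J x" for x
  proof -
    have "m x * cmod (conv M gmult ginv g K x)
        \<le> N * (\<integral>y. indicator C y * weighted_kernel (gmult (ginv y) x) \<partial>M)"
      using conv_pointwise_bound[OF r gL bd Holder(1)] by simp
    also have "\<dots> \<le> (N * measure M C powr ((r - 1) / r)) * J x powr (1 / r)"
      using mult_left_mono[OF Holder(2) N] by (simp add: mult.assoc)
    finally have "(m x * cmod (conv M gmult ginv g K x)) powr r
        \<le> ((N * measure M C powr ((r - 1) / r)) * J x powr (1 / r)) powr r"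
      using moderate_pos[of x] r by (intro powr_mono2) auto
    then show ?thesis using J0[of x] r by (simp add: c_def powr_mult powr_powr)
  qed
  \<comment> \<open>by Tonelli and left invariance, \<open>\<integral> J = |C| * \<parallel>w K\<parallel>_r ^ r\<close>\<close>
  have J_nn: "ennreal (J x)
      = (\<integral>\<^sup>+y. ennreal (indicator C y * weighted_kernel (gmult (ginv y) x) powr r) \<partial>M)" for x
    unfolding J_def using Jint[of x]
    by (intro nn_integral_eq_integral[symmetric]) (auto simp: weighted_kernel_nonneg)
  have ind: "ennreal (indicator C y * a) = indicator C y * ennreal a" for y a
    by (simp split: split_indicator)
  have "(\<integral>\<^sup>+x. ennreal (J x) \<partial>M)
      = (\<integral>\<^sup>+x. \<integral>\<^sup>+y. indicator C y * ennreal (weighted_kernel (gmult (ginv y) x) powr r) \<partial>M \<partial>M)"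
    by (simp only: J_nn ind)
  also have "\<dots> = emeasure M C * (\<integral>\<^sup>+z. ennreal (weighted_kernel z powr r) \<partial>M)"
    by (rule nn_integral_indicator_translates[OF _ CS]) measurable
  also have "\<dots> < \<infinity>"
  proof -
    have "integrable M (\<lambda>z. weighted_kernel z powr r)"
      using kernel_Lpw[OF r] by (simp add: Lpw_def weighted_kernel_def)
    then show ?thesis
      using Cfin by (simp add: nn_integral_eq_integral ennreal_mult_less_top less_top)
  qed
  finally have "(\<integral>\<^sup>+x. ennreal (J x) \<partial>M) < \<infinity>" .
  moreover have "J \<in> borel_measurable M"
  proof -
    have "(\<lambda>p. indicator C (snd p) * weighted_kernel (gmult (ginv (snd p)) (fst p)) powr r)
        \<in> borel_measurable (M \<Otimes>\<^sub>M M)"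
      using CS by measurable
    then show ?thesis
      unfolding J_def by (rule borel_measurable_lebesgue_integral[OF measurable_cong[THEN iffD1], rotated]) auto
  qed
  ultimately have "(\<integral>\<^sup>+x. ennreal ((m x * cmod (conv M gmult ginv g K x)) powr r) \<partial>M) < \<infinity>"
  proof -
    assume J: "(\<integral>\<^sup>+x. ennreal (J x) \<partial>M) < \<infinity>" "J \<in> borel_measurable M"
    have "(\<integral>\<^sup>+x. ennreal ((m x * cmod (conv M gmult ginv g K x)) powr r) \<partial>M)
        \<le> (\<integral>\<^sup>+x. ennreal c * ennreal (J x) \<partial>M)"
      using pointwise J0 by (intro nn_integral_mono) (auto simp: c_def ennreal_mult[symmetric])
    also have "\<dots> = ennreal c * (\<integral>\<^sup>+x. ennreal (J x) \<partial>M)"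
      using J(2) by (intro nn_integral_cmult) measurable
    also have "\<dots> < \<infinity>" using J(1) by (simp add: ennreal_mult_less_top less_top)
    finally show ?thesis .
  qed
  then show ?thesis
    using borel_measurable_conv[OF g] unfolding Lpw_def by (auto intro!: integrableI_nonneg)
qed


definition bounded_compact_support :: "('a \<Rightarrow> complex) \<Rightarrow> bool" where
  "bounded_compact_support g \<longleftrightarrow> g \<in> borel_measurable M \<and> (\<exists>C N. compact C \<and> N \<ge> 0 \<and>
     (\<forall>y. cmod (g y) \<le> N * indicator C y) \<and> (\<forall>y. m y * cmod (g y) \<le> N * indicator C y))"

lemma Lpw_conv_test_function:
  "r > 1 \<Longrightarrow> bounded_compact_support g \<Longrightarrow> Lpw M r m (conv M gmult ginv g K)"
  unfolding bounded_compact_support_def using Lpw_conv_bounded_support by blast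

lemma Lpw_test_function:
  assumes p: "p > 0" and g: "bounded_compact_support g"
  shows "Lpw M p m g"
proof -
  obtain C N where "g \<in> borel_measurable M" "compact C" "N \<ge> 0" "\<And>y. m y * cmod (g y) \<le> N * indicator C y"
    using g unfolding bounded_compact_support_def by blast
  then show ?thesis
    using Lpw_bounded_support[OF p, where g=g and v=m and C=C and N=N and M=M] moderate_pos
      compact_in_sets emeasure_compact_finite
    by (simp add: less_imp_le)
qed

lemma voice_add: "voice ip rep u (v + v') = (\<lambda>y. voice ip rep u v y + voice ip rep u v' y)"
  by (simp add: voice_def ip_add_left)

lemma voice_smul: "voice ip rep u (smul a v) = (\<lambda>y. a * voice ip rep u v y)"
  by (simp add: voice_def ip_smul_left)

lemma Sw_add: "v \<in> Sw M w ip rep u \<Longrightarrow> v' \<in> Sw M w ip rep u \<Longrightarrow> v + v' \<in> Sw M w ip rep u"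
  using weight_pos by (auto simp: Sw_def voice_add intro!: Lpw_add less_imp_le)

lemma Sw_smul: "v \<in> Sw M w ip rep u \<Longrightarrow> smul a v \<in> Sw M w ip rep u"
  using weight_pos by (auto simp: Sw_def voice_smul intro!: Lpw_cmult less_imp_le)

text \<open>The adjoint \<open>V* g\<close> of the voice transform, as the anti-linear functional \<open>v \<mapsto> \<langle>g, V v\<rangle>\<close> on \<open>S_w\<close>.\<close>

definition voice_adjoint where
  "voice_adjoint g = (\<lambda>v. if v \<in> Sw M w ip rep u then (\<integral>y. g y * cnj (voice ip rep u v y) \<partial>M) else 0)"

lemma voice_adjoint_bound:
  assumes g: "bounded_compact_support g" and v: "v \<in> Sw M w ip rep u"
  shows "integrable M (\<lambda>y. g y * cnj (voice ip rep u v y))"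
    and "cmod (voice_adjoint g v)
           \<le> Lpw_norm M 2 (\<lambda>y. inverse (w y)) g * Lpw_norm M 2 w (voice ip rep u v)"
proof -
  obtain C N where gm: "g \<in> borel_measurable M" and C: "compact C" "N \<ge> 0"
    and bd: "\<And>y. cmod (g y) \<le> N * indicator C y"
    using g unfolding bounded_compact_support_def by blast
  \<comment> \<open>as \<open>w \<ge> 1\<close>, \<open>g\<close> lies in \<open>L_{2,1/w}\<close>, the dual of the space \<open>L_{2,w}\<close> containing \<open>V v\<close>\<close>
  have "inverse (w y) * cmod (g y) \<le> N * indicator C y" for y
  proof -
    have "inverse (w y) * cmod (g y) \<le> 1 * cmod (g y)"
      using weight_ge_1[of y] by (intro mult_right_mono) (auto simp: inverse_le_1_iff)
    then show ?thesis using bd[of y] by simp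
  qed
  then have gL: "Lpw M 2 (\<lambda>y. inverse (w y)) g"
    using compact_in_sets[OF C(1)] emeasure_compact_finite[OF C(1)] weight_pos
    by (intro Lpw_bounded_support[OF _ gm _ _ _ C(2)]) (auto simp: less_imp_le)
  have vL: "Lpw M 2 (\<lambda>y. inverse (inverse (w y))) (\<lambda>y. cnj (voice ip rep u v y))"
    using v by (simp add: Sw_def Lpw_cnj)
  note H = Lpw_Holder[of 2 2 "\<lambda>y. inverse (w y)", OF _ _ _ _ _ gL vL]
  show "integrable M (\<lambda>y. g y * cnj (voice ip rep u v y))" using H(1) weight_pos by simp
  show "cmod (voice_adjoint g v)
      \<le> Lpw_norm M 2 (\<lambda>y. inverse (w y)) g * Lpw_norm M 2 w (voice ip rep u v)"
    using H(2) weight_pos v by (simp add: voice_adjoint_def Lpw_norm_cnj)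
qed

lemma voice_adjoint_in_Sw_dual:
  assumes g: "bounded_compact_support g"
  shows "voice_adjoint g \<in> Sw_dual M w smul ip rep u"
  unfolding Sw_dual_def
proof (intro CollectI conjI ballI allI impI)
  fix v v' assume v: "v \<in> Sw M w ip rep u" and v': "v' \<in> Sw M w ip rep u"
  have "voice_adjoint g (v + v')
      = (\<integral>y. g y * cnj (voice ip rep u v y) + g y * cnj (voice ip rep u v' y) \<partial>M)"
    using Sw_add[OF v v'] by (simp add: voice_adjoint_def voice_add distrib_left)
  then show "voice_adjoint g (v + v') = voice_adjoint g v + voice_adjoint g v'"
    using v v' voice_adjoint_bound(1)[OF g v] voice_adjoint_bound(1)[OF g v']
    by (simp add: voice_adjoint_def)
next
  fix a v assume v: "v \<in> Sw M w ip rep u"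
  have "voice_adjoint g (smul a v) = (\<integral>y. cnj a * (g y * cnj (voice ip rep u v y)) \<partial>M)"
    using Sw_smul[OF v] by (simp add: voice_adjoint_def voice_smul mult_ac)
  then show "voice_adjoint g (smul a v) = cnj a * voice_adjoint g v"
    using v by (simp add: voice_adjoint_def)
next
  show "\<exists>P C. finite P \<and> P \<subseteq> {1<..} \<and> (\<forall>v\<in>Sw M w ip rep u.
      cmod (voice_adjoint g v) \<le> C * (\<Sum>p\<in>P. Lpw_norm M p w (voice ip rep u v)))"
    using voice_adjoint_bound(2)[OF g]
    by (intro exI[of _ "{2}"] exI[of _ "Lpw_norm M 2 (\<lambda>y. inverse (w y)) g"]) auto
qed (simp add: voice_adjoint_def)

lemma ext_voice_voice_adjoint: "ext_voice rep u (voice_adjoint g) = conv M gmult ginv g K"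
proof
  fix x
  have "cnj (voice ip rep u (rep x u) y) = K (gmult (ginv y) x)" for y
    by (simp add: voice_rep kernel_swap[of y x])
  then show "ext_voice rep u (voice_adjoint g) x = conv M gmult ginv g K x"
    using rep_u_in_Sw[of x] by (simp add: ext_voice_def voice_adjoint_def conv_def)
qed

lemma voice_adjoint_in_Co:
  "r > 1 \<Longrightarrow> bounded_compact_support g \<Longrightarrow> voice_adjoint g \<in> Co M w smul ip rep u r m"
  unfolding Co_def
  using voice_adjoint_in_Sw_dual Lpw_conv_test_function by (simp add: ext_voice_voice_adjoint)


lemma test_function_truncations:
  assumes f: "f \<in> borel_measurable M"
  obtains fn where "\<And>n. bounded_compact_support (fn n)" and "\<And>n y. cmod (fn n y) \<le> cmod (f y)"
    and "\<And>y. eventually (\<lambda>n. fn n y = f y) sequentially"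
proof -
  obtain Cs :: "nat \<Rightarrow> 'a set" where Cs: "\<And>n. compact (Cs n)" "incseq Cs" "(\<Union>n. Cs n) = UNIV"
    using compact_exhaustion by blast
  define E where "E n = Cs n \<inter> {y. cmod (f y) \<le> real n} \<inter> {y. m y \<le> real n}" for n
  define fn where "fn n y = indicator (E n) y * f y" for n y
  have "E n \<in> sets M" for n
  proof -
    have "{y \<in> space M. cmod (f y) \<le> real n} \<in> sets M" "{y \<in> space M. m y \<le> real n} \<in> sets M"
      using f by measurable
    then show ?thesis using compact_in_sets[OF Cs(1)] unfolding E_def by (simp add: space_M Int_assoc)
  qed
  then have fn_meas: "fn n \<in> borel_measurable M" for n unfolding fn_def using f by measurable
  have test: "bounded_compact_support (fn n)" for n
    unfolding bounded_compact_support_def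
  proof (intro conjI exI[of _ "Cs n"] exI[of _ "real n * real n + real n"] allI)
    fix y
    have "y \<in> E n \<Longrightarrow> cmod (f y) \<le> real n * real n + real n"
      by (auto simp: E_def intro: add_increasing)
    then show "cmod (fn n y) \<le> (real n * real n + real n) * indicator (Cs n) y"
      by (auto simp: fn_def E_def norm_mult split: split_indicator)
    have "y \<in> E n \<Longrightarrow> m y * cmod (f y) \<le> real n * real n"
      using moderate_pos[of y] by (intro mult_mono) (auto simp: E_def)
    then show "m y * cmod (fn n y) \<le> (real n * real n + real n) * indicator (Cs n) y"
      by (auto simp: fn_def E_def norm_mult split: split_indicator)
  qed (use Cs fn_meas in auto)
  have dom: "cmod (fn n y) \<le> cmod (f y)" for n y
    by (simp add: fn_def norm_mult split: split_indicator)
  have ev: "eventually (\<lambda>n. fn n y = f y) sequentially" for y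
  proof -
    obtain n0 where "y \<in> Cs n0" using Cs(3) by blast
    then have "\<forall>\<^sub>F n in sequentially. y \<in> Cs n"
      using Cs(2) by (auto simp: eventually_sequentially incseq_def)
    moreover have "\<forall>\<^sub>F n in sequentially. cmod (f y) \<le> real n" "\<forall>\<^sub>F n in sequentially. m y \<le> real n"
      by (simp_all add: eventually_sequentially real_nat_ceiling_ge le_nat_iff[symmetric]
          exI[of _ "nat \<lceil>cmod (f y)\<rceil>"] exI[of _ "nat \<lceil>m y\<rceil>"]) 
    ultimately show ?thesis by eventually_elim (simp add: fn_def E_def)
  qed
  from test dom ev show ?thesis by (rule that)
qed

lemma conv_dominated_convergence:
  assumes r: "r > 1" and f: "Lpw M r m f" and fn: "\<And>n. fn n \<in> borel_measurable M"
    and dom: "\<And>n y. cmod (fn n y) \<le> cmod (f y)" and lim: "\<And>y. (\<lambda>n. fn n y) \<longlonglongrightarrow> f y"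
  shows "(\<lambda>n. conv M gmult ginv (fn n) K x) \<longlonglongrightarrow> conv M gmult ginv f K x"
  unfolding conv_def
proof (rule integral_dominated_convergence)
  show "integrable M (\<lambda>y. cmod (f y * K (gmult (ginv y) x)))"
    using conv_integrable[OF r f] by simp
  show "AE y in M. norm (fn n y * K (gmult (ginv y) x)) \<le> cmod (f y * K (gmult (ginv y) x))" for n
    using dom by (intro AE_I2) (simp add: norm_mult mult_right_mono)
qed (use f fn lim in \<open>auto simp: Lpw_def intro!: tendsto_mult\<close>)

lemma conv_bounded_by_test_functions:
  assumes r: "r > 1" and f: "Lpw M r m f" and B: "B \<ge> 0"
    and test: "\<And>g. bounded_compact_support g
                 \<Longrightarrow> Lpw_norm M r m (conv M gmult ginv g K) \<le> B * Lpw_norm M r m g"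
  shows "Lpw M r m (conv M gmult ginv f K)"
    and "Lpw_norm M r m (conv M gmult ginv f K) \<le> B * Lpw_norm M r m f"
proof -
  have fm: "f \<in> borel_measurable M" using f by (simp add: Lpw_def)
  obtain fn where test_fn: "\<And>n. bounded_compact_support (fn n)" and dom: "\<And>n y. cmod (fn n y) \<le> cmod (f y)"
    and ev: "\<And>y. eventually (\<lambda>n. fn n y = f y) sequentially"
    using test_function_truncations[OF fm] by blast
  have fn_meas: "fn n \<in> borel_measurable M" for n
    using test_fn by (simp add: bounded_compact_support_def)
  have "Lpw_norm M r m (conv M gmult ginv (fn n) K) \<le> B * Lpw_norm M r m f" for n
  proof -
    have "Lpw_norm M r m (fn n) \<le> Lpw_norm M r m f"
      using Lpw_mono(2)[OF f fn_meas dom] moderate_pos r by (simp add: less_imp_le)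
    then show ?thesis using test[OF test_fn] mult_left_mono[OF _ B] by (meson order_trans)
  qed
  moreover have "(\<lambda>n. conv M gmult ginv (fn n) K x) \<longlonglongrightarrow> conv M gmult ginv f K x" for x
    using ev by (intro conv_dominated_convergence[OF r f fn_meas dom] tendsto_eventually) 
  ultimately show "Lpw M r m (conv M gmult ginv f K)"
    and "Lpw_norm M r m (conv M gmult ginv f K) \<le> B * Lpw_norm M r m f"
    using Lpw_Fatou[of r m M "\<lambda>n. conv M gmult ginv (fn n) K"] r moderate_pos
      Lpw_conv_test_function[OF r test_fn] borel_measurable_conv[OF fm]
    by (auto simp: less_imp_le)
qed


lemma embed_smul_zero: "embed M w ip rep u (smul 0 x) = (\<lambda>v. 0)"
  by (auto simp: embed_def smul_zero ip_zero_left)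

lemma embed_rep_u: "embed M w ip rep u (smul a (rep x u)) (rep y u) = a * K (gmult (ginv x) y)"
  using rep_u_in_Sw[of y] by (simp add: embed_def ip_smul_left ip_rep kernel_def)

lemma conv_sample_sum:
  assumes r: "r > 1" and g: "Lpw M r m g"
  shows "(\<Sum>i\<in>F. cnj (c i) * conv M gmult ginv g K (xs i))
           = (\<integral>y. g y * cnj (\<Sum>i\<in>F. c i * K (gmult (ginv (xs i)) y)) \<partial>M)"
proof -
  have conv_eq: "conv M gmult ginv g K x = (\<integral>y. g y * cnj (K (gmult (ginv x) y)) \<partial>M)" for x
    by (simp add: conv_def kernel_swap[of _ x])
  have "integrable M (\<lambda>y. g y * cnj (K (gmult (ginv x) y)))" for x
    using conv_integrable[OF r g, of x] by (simp add: kernel_swap[of _ x])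
  then have "(\<Sum>i\<in>F. cnj (c i) * conv M gmult ginv g K (xs i))
      = (\<integral>y. (\<Sum>i\<in>F. cnj (c i) * (g y * cnj (K (gmult (ginv (xs i)) y)))) \<partial>M)"
    by (simp add: conv_eq integral_sum)
  then show ?thesis by (simp add: sum_distrib_left mult_ac)
qed

end

section \<open>Weak frames and atomic decompositions\<close>

locale coorbit_frame = moderate_coorbit +
  fixes r I xs \<theta> c0 S
  assumes exponent: "1 < r" and weights_pos: "\<forall>i\<in>I. 0 < \<theta> i"
    and frame_constant_pos: "0 < c0"
    and lower_frame: "\<forall>\<phi>\<in>Co M w smul ip rep u r m.
          ellw I r \<theta> (\<lambda>i. \<phi> (rep (xs i) u)) \<and>
          c0 * Co_norm M rep u r m \<phi> \<le> ellw_norm I r \<theta> (\<lambda>i. \<phi> (rep (xs i) u))"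
    and synthesis: "\<forall>c. ellw I (r / (r - 1)) (\<lambda>i. inverse (\<theta> i)) c \<longrightarrow>
          S c \<in> Co M w smul ip rep u (r / (r - 1)) (\<lambda>x. inverse (m x)) \<and>
          ((\<lambda>F. Co_norm M rep u (r / (r - 1)) (\<lambda>x. inverse (m x))
                  (\<lambda>v. (\<Sum>i\<in>F. embed M w ip rep u (smul (c i) (rep (xs i) u)) v) - S c v))
             \<longlongrightarrow> 0) (finite_subsets_at_top I)"
    and synthesis_bounded: "\<exists>D. \<forall>c. ellw I (r / (r - 1)) (\<lambda>i. inverse (\<theta> i)) c \<longrightarrow>
          Co_norm M rep u (r / (r - 1)) (\<lambda>x. inverse (m x)) (S c)
            \<le> D * ellw_norm I (r / (r - 1)) (\<lambda>i. inverse (\<theta> i)) c"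
begin

abbreviation "q \<equiv> r / (r - 1)"

definition synthesis_bound :: "real \<Rightarrow> bool" where
  "synthesis_bound D \<longleftrightarrow> 0 \<le> D \<and> (\<forall>c. ellw I q (\<lambda>i. inverse (\<theta> i)) c \<longrightarrow>
     Co_norm M rep u q (\<lambda>x. inverse (m x)) (S c) \<le> D * ellw_norm I q (\<lambda>i. inverse (\<theta> i)) c)"

lemma synthesis_bound_exists: "\<exists>D. synthesis_bound D"
proof -
  obtain D where D: "\<And>c. ellw I q (\<lambda>i. inverse (\<theta> i)) c \<Longrightarrow>
      Co_norm M rep u q (\<lambda>x. inverse (m x)) (S c) \<le> D * ellw_norm I q (\<lambda>i. inverse (\<theta> i)) c"
    using synthesis_bounded by blast
  have "Co_norm M rep u q (\<lambda>x. inverse (m x)) (S c) \<le> max D 0 * ellw_norm I q (\<lambda>i. inverse (\<theta> i)) c"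
    if "ellw I q (\<lambda>i. inverse (\<theta> i)) c" for c
    using D[OF that] mult_right_mono[of D "max D 0" "ellw_norm I q (\<lambda>i. inverse (\<theta> i)) c"]
    by (simp add: ellw_norm_def)
  then show ?thesis unfolding synthesis_bound_def by (intro exI[of _ "max D 0"]) auto
qed

lemma synthesis_finite_support:
  assumes c: "ellw I q (\<lambda>i. inverse (\<theta> i)) c"
    and F: "finite F" "F \<subseteq> I" and supp: "\<And>i. i \<notin> F \<Longrightarrow> c i = 0"
  shows "Lpw_norm M q (\<lambda>x. inverse (m x))
           (\<lambda>y. (\<Sum>i\<in>F. c i * K (gmult (ginv (xs i)) y)) - ext_voice rep u (S c) y) = 0"
proof -
  define \<Phi> where "\<Phi> F' = (\<lambda>v. (\<Sum>i\<in>F'. embed M w ip rep u (smul (c i) (rep (xs i) u)) v) - S c v)" for F'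
  \<comment> \<open>the net of partial sums of \<open>\<Sum> c_i \<pi>(x_i) u\<close> is eventually constant\<close>
  have "eventually (\<lambda>F'. \<Phi> F' = \<Phi> F) (finite_subsets_at_top I)"
    unfolding eventually_finite_subsets_at_top
  proof (intro exI[of _ F] conjI allI impI)
    fix Y assume Y: "finite Y \<and> F \<subseteq> Y \<and> Y \<subseteq> I"
    have "(\<Sum>i\<in>Y. embed M w ip rep u (smul (c i) (rep (xs i) u)) v)
        = (\<Sum>i\<in>F. embed M w ip rep u (smul (c i) (rep (xs i) u)) v)" for v
      by (rule sum.mono_neutral_right) (use Y supp in \<open>auto simp: embed_smul_zero\<close>)
    then show "\<Phi> Y = \<Phi> F" by (simp add: \<Phi>_def)
  qed (use F in auto)
  then have "((\<lambda>F'. Co_norm M rep u q (\<lambda>x. inverse (m x)) (\<Phi> F'))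
      \<longlongrightarrow> Co_norm M rep u q (\<lambda>x. inverse (m x)) (\<Phi> F)) (finite_subsets_at_top I)"
    by (rule tendsto_eventually[OF eventually_mono]) simp
  moreover have "((\<lambda>F'. Co_norm M rep u q (\<lambda>x. inverse (m x)) (\<Phi> F')) \<longlongrightarrow> 0) (finite_subsets_at_top I)"
    using synthesis c by (simp add: \<Phi>_def)
  ultimately have "Co_norm M rep u q (\<lambda>x. inverse (m x)) (\<Phi> F) = 0"
    using tendsto_unique finite_subsets_at_top_neq_bot by blast
  then show ?thesis
    by (simp add: Co_norm_def \<Phi>_def ext_voice_def embed_rep_u)
qed


lemma synthesis_pairing_bound:
  assumes D: "synthesis_bound D" and g: "Lpw M r m g" and c: "ellw I q (\<lambda>i. inverse (\<theta> i)) c"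
    and F: "finite F" "F \<subseteq> I" and supp: "\<And>i. i \<notin> F \<Longrightarrow> c i = 0"
  shows "cmod (\<integral>y. g y * cnj (\<Sum>i\<in>F. c i * K (gmult (ginv (xs i)) y)) \<partial>M)
           \<le> Lpw_norm M r m g * (D * ellw_norm I q (\<lambda>i. inverse (\<theta> i)) c)"
proof -
  note q = conjugate_exponent[OF exponent]
  define G where "G y = (\<Sum>i\<in>F. c i * K (gmult (ginv (xs i)) y))" for y
  define E where "E = ext_voice rep u (S c)"
  have minv: "\<And>x. 0 \<le> inverse (m x)" "(\<lambda>x. inverse (m x)) \<in> borel_measurable M"
    using moderate_pos by (auto simp: less_imp_le)
  have EL: "Lpw M q (\<lambda>x. inverse (m x)) E" using synthesis c by (simp add: Co_def E_def)
  have "Lpw M q (\<lambda>x. inverse (m x)) G"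
    unfolding G_def using q(1) minv by (intro Lpw_sum Lpw_cmult kernel_translate_Lpw(1)) auto
  then have GEL: "Lpw M q (\<lambda>x. inverse (m x)) (\<lambda>y. G y - E y)"
    using EL q(1) minv by (intro Lpw_diff) auto
  note Holder_E = Lpw_Holder[OF exponent q(1,2) moderate_pos borel_measurable_moderate g Lpw_cnj[OF EL]]
  note Holder_GE = Lpw_Holder[OF exponent q(1,2) moderate_pos borel_measurable_moderate g Lpw_cnj[OF GEL]]
  \<comment> \<open>\<open>S c\<close> and the finite sum \<open>G\<close> differ by an element of norm zero\<close>
  have "(\<integral>y. g y * cnj (G y) \<partial>M) = (\<integral>y. g y * cnj (E y) + g y * cnj (G y - E y) \<partial>M)"
    by (rule Bochner_Integration.integral_cong) (simp_all add: algebra_simps)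
  also have "\<dots> = (\<integral>y. g y * cnj (E y) \<partial>M) + (\<integral>y. g y * cnj (G y - E y) \<partial>M)"
    by (rule Bochner_Integration.integral_add[OF Holder_E(1) Holder_GE(1)])
  finally have "(\<integral>y. g y * cnj (G y) \<partial>M) = (\<integral>y. g y * cnj (E y) \<partial>M) + (\<integral>y. g y * cnj (G y - E y) \<partial>M)" .
  moreover have "Lpw_norm M q (\<lambda>x. inverse (m x)) (\<lambda>y. G y - E y) = 0"
    using synthesis_finite_support[OF c F supp] by (simp add: G_def E_def)
  then have "cmod (\<integral>y. g y * cnj (G y - E y) \<partial>M) \<le> 0"
    using Holder_GE(2) by (simp only: Lpw_norm_cnj mult_zero_right)
  moreover have "cmod (\<integral>y. g y * cnj (E y) \<partial>M) \<le> Lpw_norm M r m g * (D * ellw_norm I q (\<lambda>i. inverse (\<theta> i)) c)"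
  proof -
    have "Lpw_norm M q (\<lambda>x. inverse (m x)) E \<le> D * ellw_norm I q (\<lambda>i. inverse (\<theta> i)) c"
      using D c by (simp add: synthesis_bound_def Co_norm_def E_def)
    then have "Lpw_norm M r m g * Lpw_norm M q (\<lambda>x. inverse (m x)) E
        \<le> Lpw_norm M r m g * (D * ellw_norm I q (\<lambda>i. inverse (\<theta> i)) c)"
      by (rule mult_left_mono[OF _ Lpw_norm_nonneg])
    then show ?thesis using Holder_E(2) by (simp add: Lpw_norm_cnj)
  qed
  ultimately show ?thesis
    using norm_triangle_ineq[of "\<integral>y. g y * cnj (E y) \<partial>M" "\<integral>y. g y * cnj (G y - E y) \<partial>M"]
    by (simp add: G_def)
qed

lemma sample_sum_bound:
  assumes D: "synthesis_bound D" and g: "Lpw M r m g" and F: "finite F" "F \<subseteq> I"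
  shows "(\<Sum>i\<in>F. (\<theta> i * cmod (conv M gmult ginv g K (xs i))) powr r) \<le> (D * Lpw_norm M r m g) powr r"
proof -
  define a where "a i = conv M gmult ginv g K (xs i)" for i
  define P where "P = (\<Sum>i\<in>F. (\<theta> i * cmod (a i)) powr r)"
  define ng where "ng = Lpw_norm M r m g"
  obtain c where supp: "\<And>i. i \<notin> F \<Longrightarrow> c i = 0" and pairing: "(\<Sum>i\<in>F. cnj (c i) * a i) = P"
    and c: "ellw I q (\<lambda>i. inverse (\<theta> i)) c" and c_norm: "ellw_norm I q (\<lambda>i. inverse (\<theta> i)) c = P powr ((r - 1) / r)"
    using dual_sequence[OF exponent F weights_pos, of a, folded P_def] by blast
  have P0: "P \<ge> 0" unfolding P_def by (intro sum_nonneg) simp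
  have "P = cmod (\<Sum>i\<in>F. cnj (c i) * conv M gmult ginv g K (xs i))"
    using pairing P0 by (simp add: a_def)
  also have "\<dots> = cmod (\<integral>y. g y * cnj (\<Sum>i\<in>F. c i * K (gmult (ginv (xs i)) y)) \<partial>M)"
    by (simp only: conv_sample_sum[OF exponent g])
  also have "\<dots> \<le> ng * (D * ellw_norm I q (\<lambda>i. inverse (\<theta> i)) c)"
    unfolding ng_def by (rule synthesis_pairing_bound[OF D g c F supp])
  finally have le: "P \<le> ng * D * P powr ((r - 1) / r)"
    by (simp add: c_norm mult.assoc)
  show ?thesis
  proof (cases "P = 0")
    case True
    then show ?thesis by (simp add: P_def a_def)
  next
    case False
    then have Ppos: "P > 0" using P0 by simp
    have "1 / r = 1 - (r - 1) / r" using exponent by (simp add: field_simps)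
    then have "P powr (1 / r) = P / P powr ((r - 1) / r)" using Ppos by (simp add: powr_diff)
    also have "\<dots> \<le> ng * D" using le Ppos by (simp add: divide_le_eq)
    finally have "(P powr (1 / r)) powr r \<le> (ng * D) powr r"
      using Ppos exponent by (intro powr_mono2) auto
    then show ?thesis using Ppos exponent by (simp add: powr_powr P_def a_def ng_def mult.commute)
  qed
qed

lemma conv_test_function_bound:
  assumes D: "synthesis_bound D" and g: "bounded_compact_support g"
  shows "Lpw_norm M r m (conv M gmult ginv g K) \<le> D / c0 * Lpw_norm M r m g"
proof -
  define a where "a = (\<lambda>i. conv M gmult ginv g K (xs i))"
  define ng where "ng = Lpw_norm M r m g"
  have "Lpw M r m g" using Lpw_test_function[OF _ g] exponent by simp
  note bound = sample_sum_bound[OF D this]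
  \<comment> \<open>the frame inequality applies to \<open>V* g\<close>, whose samples are those of \<open>g * K\<close>\<close>
  have "voice_adjoint g (rep (xs i) u) = a i" for i
    using fun_cong[OF ext_voice_voice_adjoint[of g], of "xs i"] by (simp add: ext_voice_def a_def)
  moreover have "Co_norm M rep u r m (voice_adjoint g) = Lpw_norm M r m (conv M gmult ginv g K)"
    by (simp add: Co_norm_def ext_voice_voice_adjoint)
  ultimately have frame: "ellw I r \<theta> a" "c0 * Lpw_norm M r m (conv M gmult ginv g K) \<le> ellw_norm I r \<theta> a"
    using lower_frame voice_adjoint_in_Co[OF exponent g] by auto
  have "infsum (\<lambda>i. (\<theta> i * cmod (a i)) powr r) I \<le> (D * ng) powr r"
    using frame(1) bound by (intro infsum_le_finite_sums) (auto simp: ellw_def a_def ng_def)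
  then have "ellw_norm I r \<theta> a \<le> ((D * ng) powr r) powr (1 / r)"
    unfolding ellw_norm_def using exponent by (intro powr_mono2) (auto intro!: infsum_nonneg)
  also have "\<dots> = D * ng"
    using exponent D Lpw_norm_nonneg[of M r m g] by (simp add: synthesis_bound_def ng_def powr_powr)
  finally show ?thesis
    using frame(2) frame_constant_pos by (simp add: field_simps ng_def)
qed

lemma right_convolution_bounded:
  "\<exists>B\<ge>0. \<forall>f. Lpw M r m f \<longrightarrow>
     (AE x in M. integrable M (\<lambda>y. f y * K (gmult (ginv y) x))) \<and>
     Lpw M r m (conv M gmult ginv f K) \<and>
     Lpw_norm M r m (conv M gmult ginv f K) \<le> B * Lpw_norm M r m f"
proof -
  obtain D where D: "synthesis_bound D" using synthesis_bound_exists by blast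
  then have B: "D / c0 \<ge> 0" using frame_constant_pos by (simp add: synthesis_bound_def)
  show ?thesis
  proof (intro exI[of _ "D / c0"] conjI B allI impI)
    fix f assume f: "Lpw M r m f"
    show "AE x in M. integrable M (\<lambda>y. f y * K (gmult (ginv y) x))"
      using conv_integrable[OF exponent f] by simp
    show "Lpw M r m (conv M gmult ginv f K)"
      and "Lpw_norm M r m (conv M gmult ginv f K) \<le> D / c0 * Lpw_norm M r m f"
      using conv_bounded_by_test_functions[OF exponent f B conv_test_function_bound[OF D]] by blast+
  qed
qed

end

theorem mainTheorem1:
  fixes gmult :: "'g::{t2_space,second_countable_topology} \<Rightarrow> 'g \<Rightarrow> 'g"
    and ginv :: "'g \<Rightarrow> 'g" and e :: 'g and M :: "'g measure" and w :: "'g \<Rightarrow> real"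
    and smul :: "complex \<Rightarrow> 'h::{real_normed_vector,banach} \<Rightarrow> 'h"
    and ip :: "'h \<Rightarrow> 'h \<Rightarrow> complex" and rep :: "'g \<Rightarrow> 'h \<Rightarrow> 'h" and u :: 'h
    and r :: real and m :: "'g \<Rightarrow> real"
    and I :: "'i set" and xs :: "'i \<Rightarrow> 'g" and \<theta> :: "'i \<Rightarrow> real"
  assumes setting: "coorbit_setting gmult ginv e M w smul ip rep u"
    and r: "1 < r"
    and m: "w_moderate gmult w m"
    and I: "countable I"
    and \<theta>: "\<forall>i\<in>I. 0 < \<theta> i"
    and frame: "\<exists>c C. 0 < c \<and> c \<le> C \<and>
       (\<forall>\<phi>\<in>Co M w smul ip rep u r m.
          ellw I r \<theta> (\<lambda>i. \<phi> (rep (xs i) u)) \<and>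
          c * Co_norm M rep u r m \<phi> \<le> ellw_norm I r \<theta> (\<lambda>i. \<phi> (rep (xs i) u)) \<and>
          ellw_norm I r \<theta> (\<lambda>i. \<phi> (rep (xs i) u)) \<le> C * Co_norm M rep u r m \<phi>)"
    and atomic: "\<exists>S :: ('i \<Rightarrow> complex) \<Rightarrow> ('h \<Rightarrow> complex).
       (\<forall>c. ellw I (r / (r - 1)) (\<lambda>i. inverse (\<theta> i)) c \<longrightarrow>
          S c \<in> Co M w smul ip rep u (r / (r - 1)) (\<lambda>x. inverse (m x)) \<and>
          ((\<lambda>F. Co_norm M rep u (r / (r - 1)) (\<lambda>x. inverse (m x))
                  (\<lambda>v. (\<Sum>i\<in>F. embed M w ip rep u (smul (c i) (rep (xs i) u)) v) - S c v))
             \<longlongrightarrow> 0) (finite_subsets_at_top I)) \<and>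
       (\<forall>c d a b. ellw I (r / (r - 1)) (\<lambda>i. inverse (\<theta> i)) c \<longrightarrow>
          ellw I (r / (r - 1)) (\<lambda>i. inverse (\<theta> i)) d \<longrightarrow>
          S (\<lambda>i. a * c i + b * d i) = (\<lambda>v. a * S c v + b * S d v)) \<and>
       (\<exists>D. \<forall>c. ellw I (r / (r - 1)) (\<lambda>i. inverse (\<theta> i)) c \<longrightarrow>
          Co_norm M rep u (r / (r - 1)) (\<lambda>x. inverse (m x)) (S c)
            \<le> D * ellw_norm I (r / (r - 1)) (\<lambda>i. inverse (\<theta> i)) c)"
  shows "\<exists>B\<ge>0. \<forall>f. Lpw M r m f \<longrightarrow>
           (AE x in M. integrable M (\<lambda>y. f y * kernel ip rep u (gmult (ginv y) x))) \<and>
           Lpw M r m (conv M gmult ginv f (kernel ip rep u)) \<and>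
           Lpw_norm M r m (conv M gmult ginv f (kernel ip rep u)) \<le> B * Lpw_norm M r m f"
proof -
  obtain c0 S where "coorbit_frame gmult ginv e M w smul ip rep u m r I xs \<theta> c0 S"
    using setting r m \<theta> frame atomic
    unfolding coorbit_frame_def coorbit_frame_axioms_def moderate_coorbit_def
      moderate_coorbit_axioms_def coorbit_setup_def
    by blast
  then show ?thesis by (rule coorbit_frame.right_convolution_bounded)
qed

end
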